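(* Let $N$ be a compact $k$-dimensional submanifold of the unit sphere $S^{q-1}\subset\mathbb R^q$, with $k>4$, and let $\mathsf B_1$ be the second fundamental form of $N$ in $S^{q-1}$. If $\|\mathsf B_1\|^2<\frac{k-4}{\sqrt k+4}$ at every point of $N$, then $N$ is $\Phi$-SSU.
   Context: $\|\mathsf B_1\|^2=\sum_{i,j=1}^k|\mathsf B_1(\mathsf e_i,\mathsf e_j)|^2$ for an orthonormal basis $\{\mathsf e_i\}$ of the tangent space. A Riemannian $k$-manifold $N$ is $\Phi$-SSU if there is an isometric immersion $N\to\mathbb R^{Q}$ with second fundamental form $\mathsf B$ such that for every $y\in N$ and every unit $\mathsf x\in T_yN$, $\sum_{\beta=1}^k\big(4|\mathsf B(\mathsf x,\mathsf e_\beta)|^2-\langle \mathsf B(\mathsf x,\mathsf x),\mathsf B(\mathsf e_\beta,\mathsf e_\beta)\rangle\big)<0$, where $\{\mathsf e_\beta\}$ is an orthonormal basis of $T_yN$. *)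

theory Defs
  imports "HOL-Analysis.Analysis"
begin

primrec Ck_on :: "nat \<Rightarrow> ('a::real_normed_vector \<Rightarrow> 'b::real_normed_vector) \<Rightarrow> 'a set \<Rightarrow> bool" where
  "Ck_on 0 f U = continuous_on U f"
| "Ck_on (Suc n) f U =
     (\<exists>f'. (\<forall>u\<in>U. (f has_derivative f' u) (at u)) \<and> (\<forall>v. Ck_on n (\<lambda>u. f' u v) U))"

definition smooth_on :: "('a::real_normed_vector \<Rightarrow> 'b::real_normed_vector) \<Rightarrow> 'a set \<Rightarrow> bool" where
  "smooth_on f U \<longleftrightarrow> (\<forall>n. Ck_on n f U)"

definition is_chart :: "(real^'q) set \<Rightarrow> (real^'k::finite) set \<Rightarrow> (real^'k \<Rightarrow> real^'q) \<Rightarrow> bool" where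
  "is_chart N U \<phi> \<longleftrightarrow> open U \<and> smooth_on \<phi> U \<and>
     (\<forall>u\<in>U. inj (frechet_derivative \<phi> (at u))) \<and>
     (\<exists>W \<psi>. open W \<and> homeomorphism U (N \<inter> W) \<phi> \<psi>)"

definition submanifold :: "'k::finite itself \<Rightarrow> (real^'q) set \<Rightarrow> bool" where
  "submanifold (_::'k::finite itself) N \<longleftrightarrow>
     (\<forall>p\<in>N. \<exists>(U::(real^'k) set) \<phi>. is_chart N U \<phi> \<and> p \<in> \<phi> ` U)"

definition tangent_space :: "'k::finite itself \<Rightarrow> (real^'q) set \<Rightarrow> real^'q \<Rightarrow> (real^'q) set" where
  "tangent_space (_::'k::finite itself) N y =
     {X. \<exists>(U::(real^'k) set) \<phi> u v. is_chart N U \<phi> \<and> u \<in> U \<and> \<phi> u = y \<and>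
          X = frechet_derivative \<phi> (at u) v}"

definition d2 :: "('a::real_normed_vector \<Rightarrow> 'b::real_normed_vector) \<Rightarrow> 'a \<Rightarrow> 'a \<Rightarrow> 'a \<Rightarrow> 'b" where
  "d2 f u v w = frechet_derivative (\<lambda>u'. frechet_derivative f (at u') v) (at u) w"

definition sff_R :: "'k::finite itself \<Rightarrow> (real^'q) set \<Rightarrow> real^'q \<Rightarrow> real^'q \<Rightarrow> real^'q \<Rightarrow> real^'q" where
  "sff_R K N y X Y = (SOME b. \<exists>(U::(real^'k) set) \<phi> u v w.
      is_chart N U \<phi> \<and> u \<in> U \<and> \<phi> u = y \<and>
      frechet_derivative \<phi> (at u) v = X \<and> frechet_derivative \<phi> (at u) w = Y \<and>
      b = d2 \<phi> u v w - closest_point (tangent_space K N y) (d2 \<phi> u v w))"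

text \<open>Second fundamental form B_1 of N (contained in the unit sphere) in S^{q-1}:
  the component of the Euclidean one tangent to the sphere at y.\<close>
definition sff_S :: "'k::finite itself \<Rightarrow> (real^'q) set \<Rightarrow> real^'q \<Rightarrow> real^'q \<Rightarrow> real^'q \<Rightarrow> real^'q" where
  "sff_S K N y X Y = sff_R K N y X Y - (sff_R K N y X Y \<bullet> y) *\<^sub>R y"

definition onb :: "'k::finite itself \<Rightarrow> (real^'q) set \<Rightarrow> real^'q \<Rightarrow> ('k \<Rightarrow> real^'q) \<Rightarrow> bool" where
  "onb K N y e \<longleftrightarrow> (\<forall>i. e i \<in> tangent_space K N y) \<and>
     (\<forall>i j. e i \<bullet> e j = (if i = j then 1 else 0)) \<and>
     span (range e) = tangent_space K N y"

definition sqnorm_sff_S :: "'k::finite itself \<Rightarrow> (real^'q) set \<Rightarrow> real^'q \<Rightarrow> ('k \<Rightarrow> real^'q) \<Rightarrow> real" where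
  "sqnorm_sff_S K N y e = (\<Sum>i\<in>UNIV. \<Sum>j\<in>UNIV. (norm (sff_S K N y (e i) (e j)))\<^sup>2)"

text \<open>A vector of R^Q is represented as a function nat => real vanishing from index Q on;
  a map F : N -> R^Q is represented as F :: real^'q => nat => real.\<close>

definition innerQ :: "nat \<Rightarrow> (nat \<Rightarrow> real) \<Rightarrow> (nat \<Rightarrow> real) \<Rightarrow> real" where
  "innerQ Q a b = (\<Sum>i<Q. a i * b i)"

definition dF :: "nat \<Rightarrow> (real^'q \<Rightarrow> nat \<Rightarrow> real) \<Rightarrow> (real^'k \<Rightarrow> real^'q) \<Rightarrow> real^'k \<Rightarrow> real^'k \<Rightarrow> nat \<Rightarrow> real" where
  "dF Q F \<phi> u v = (\<lambda>i. if i < Q then frechet_derivative (\<lambda>u'. F (\<phi> u') i) (at u) v else 0)"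

definition d2F :: "nat \<Rightarrow> (real^'q \<Rightarrow> nat \<Rightarrow> real) \<Rightarrow> (real^'k \<Rightarrow> real^'q) \<Rightarrow> real^'k \<Rightarrow> real^'k \<Rightarrow> real^'k \<Rightarrow> nat \<Rightarrow> real" where
  "d2F Q F \<phi> u v w = (\<lambda>i. if i < Q then d2 (\<lambda>u'. F (\<phi> u') i) u v w else 0)"

definition perpQ :: "nat \<Rightarrow> (nat \<Rightarrow> real) set \<Rightarrow> (nat \<Rightarrow> real) \<Rightarrow> nat \<Rightarrow> real" where
  "perpQ Q S z = (THE n. (\<forall>i\<ge>Q. n i = 0) \<and> (\<forall>s\<in>S. innerQ Q n s = 0) \<and> (\<lambda>i. z i - n i) \<in> S)"

definition isometric_immersion :: "'k::finite itself \<Rightarrow> (real^'q) set \<Rightarrow> nat \<Rightarrow> (real^'q \<Rightarrow> nat \<Rightarrow> real) \<Rightarrow> bool" where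
  "isometric_immersion (_::'k::finite itself) N Q F \<longleftrightarrow>
     (\<forall>y\<in>N. \<forall>i\<ge>Q. F y i = 0) \<and>
     (\<forall>(U::(real^'k) set) \<phi>. is_chart N U \<phi> \<longrightarrow>
        (\<forall>i<Q. smooth_on (\<lambda>u. F (\<phi> u) i) U) \<and>
        (\<forall>u\<in>U. \<forall>v w. innerQ Q (dF Q F \<phi> u v) (dF Q F \<phi> u w) =
                        frechet_derivative \<phi> (at u) v \<bullet> frechet_derivative \<phi> (at u) w))"

definition sff_F :: "'k::finite itself \<Rightarrow> (real^'q) set \<Rightarrow> nat \<Rightarrow> (real^'q \<Rightarrow> nat \<Rightarrow> real) \<Rightarrow> real^'q \<Rightarrow> real^'q \<Rightarrow> real^'q \<Rightarrow> nat \<Rightarrow> real" where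
  "sff_F K N Q F y X Y = (SOME b. \<exists>(U::(real^'k) set) \<phi> u v w.
      is_chart N U \<phi> \<and> u \<in> U \<and> \<phi> u = y \<and>
      frechet_derivative \<phi> (at u) v = X \<and> frechet_derivative \<phi> (at u) w = Y \<and>
      b = perpQ Q (range (dF Q F \<phi> u)) (d2F Q F \<phi> u v w))"

definition Phi_SSU :: "'k::finite itself \<Rightarrow> (real^'q) set \<Rightarrow> bool" where
  "Phi_SSU K N \<longleftrightarrow> (\<exists>Q F. isometric_immersion K N Q F \<and>
     (\<forall>y\<in>N. \<forall>x\<in>tangent_space K N y. norm x = 1 \<longrightarrow>
        (\<forall>e. onb K N y e \<longrightarrow>
          (\<Sum>\<beta>\<in>UNIV. 4 * innerQ Q (sff_F K N Q F y x (e \<beta>)) (sff_F K N Q F y x (e \<beta>))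
                     - innerQ Q (sff_F K N Q F y x x) (sff_F K N Q F y (e \<beta>) (e \<beta>))) < 0)))"

end

(*
  Take as isometric immersion the inclusion of N into R^q itself (written in R^Q, Q = q).  As N
  lies in the unit sphere, differentiating |phi|^2 = 1 twice along a chart phi gives
  <D^2 phi(v,w), phi> = -<D phi v, D phi w>, so the Euclidean second fundamental form is
  B(X,Y) = B_1(X,Y) - <X,Y> y.  For a unit tangent vector x and an orthonormal frame e_beta the
  Phi-SSU sum then equals 4 sum_beta |B_1(x,e_beta)|^2 + 4 - <B_1(x,x), H> - k with
  H = sum_beta B_1(e_beta,e_beta); Cauchy-Schwarz bounds it by (4 + sqrt k) ||B_1||^2 + 4 - k < 0.

  The real work is that the second fundamental form, defined through an arbitrary chart, does not
  depend on the chart.  A line through u1 in one chart, carried into a second chart, becomes a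
  curve u2 + h t with h t / t -> v2 and D phi2 v2 = D phi1 v1; comparing the second-order
  expansions of phi1 (u1 + t v1) = phi2 (u2 + h t) modulo the tangent space identifies the normal
  parts of D^2 phi1 (v1,v1) and D^2 phi2 (v2,v2), and polarization (using the symmetry of second
  derivatives) does the rest.
*)

theory Submission
  imports Defs
begin

section \<open>Second derivatives\<close>

definition has_second_derivative_on ::
    "('a::euclidean_space \<Rightarrow> 'b::euclidean_space) \<Rightarrow> ('a \<Rightarrow> 'a \<Rightarrow> 'b) \<Rightarrow> ('a \<Rightarrow> 'a \<Rightarrow> 'a \<Rightarrow> 'b) \<Rightarrow> 'a set \<Rightarrow> bool"
  where "has_second_derivative_on f f' f'' U \<longleftrightarrow> open U \<and>
     (\<forall>u\<in>U. (f has_derivative f' u) (at u)) \<and>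
     (\<forall>u\<in>U. \<forall>v. ((\<lambda>a. f' a v) has_derivative f'' u v) (at u))"

lemma smooth_on_imp_has_second_derivative_on:
  assumes "smooth_on f U" "open U"
  obtains f' f'' where "has_second_derivative_on f f' f'' U"
proof -
  have "Ck_on 2 f U" using assms(1) unfolding smooth_on_def by blast
  then obtain f' where f': "\<forall>u\<in>U. (f has_derivative f' u) (at u)"
    and "\<forall>v. Ck_on 1 (\<lambda>u. f' u v) U"
    by (auto simp: numeral_2_eq_2)
  then have "\<forall>v. \<exists>g. \<forall>u\<in>U. ((\<lambda>u. f' u v) has_derivative g u) (at u)"
    by (metis Ck_on.simps(2) One_nat_def)
  then obtain g where "\<forall>v. \<forall>u\<in>U. ((\<lambda>u. f' u v) has_derivative g v u) (at u)"
    by metis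
  with f' assms(2) have "has_second_derivative_on f f' (\<lambda>u v. g v u) U"
    by (auto simp: has_second_derivative_on_def)
  then show thesis by (rule that)
qed

context
  fixes f :: "'a::euclidean_space \<Rightarrow> 'b::euclidean_space" and f' f'' U u
  assumes D: "has_second_derivative_on f f' f'' U" and u: "u \<in> U"
begin

lemma has_second_derivative_onD:
  shows "open U" "(f has_derivative f' u) (at u)" "((\<lambda>a. f' a v) has_derivative f'' u v) (at u)"
  using D u by (auto simp: has_second_derivative_on_def)

lemma has_second_derivative_on_frechet: "frechet_derivative f (at u) = f' u"
  using has_second_derivative_onD(2) frechet_derivative_at by metis

lemma has_second_derivative_on_d2: "d2 f u v w = f'' u v w"
proof -
  have "((\<lambda>a. f' a v) has_derivative f'' u v) (at u)" by (rule has_second_derivative_onD(3))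
  then have "((\<lambda>a. frechet_derivative f (at a) v) has_derivative f'' u v) (at u)"
    by (rule has_derivative_transform_within_open[OF _ has_second_derivative_onD(1) u])
      (use D has_second_derivative_on_def frechet_derivative_at in metis)
  then show ?thesis unfolding d2_def using frechet_derivative_at by metis
qed

lemma has_second_derivative_on_linear: "linear (f' u)"
  using has_second_derivative_onD(2) has_derivative_linear by blast

lemma has_second_derivative_on_bilinear: "bilinear (f'' u)"
proof -
  have lin: "linear (f'' u v)" for v
    using has_second_derivative_onD(3) has_derivative_linear by blast
  have uniq: "f'' u v = G" if "\<And>a. a \<in> U \<Longrightarrow> g a = f' a v" "(g has_derivative G) (at u)"
    for g v G
    using has_derivative_transform_within_open[OF that(2) has_second_derivative_onD(1) u]
      has_derivative_unique has_second_derivative_onD(3) that(1) by metis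
  have lin1: "linear (f' a)" if "a \<in> U" for a
    using D that has_derivative_linear by (auto simp: has_second_derivative_on_def)
  have add: "f'' u (a + b) = (\<lambda>w. f'' u a w + f'' u b w)" for a b
    by (rule uniq[of "\<lambda>x. f' x a + f' x b"])
      (auto intro: has_derivative_add has_second_derivative_onD(3) simp: linear_add[OF lin1])
  have scale: "f'' u (c *\<^sub>R a) = (\<lambda>w. c *\<^sub>R f'' u a w)" for a c
    by (rule uniq[of "\<lambda>x. c *\<^sub>R f' x a"])
      (auto intro: has_derivative_scaleR_right has_second_derivative_onD(3) simp: linear_scale[OF lin1])
  have "linear (\<lambda>v. f'' u v w)" for w
    by (rule linearI) (simp_all add: add scale)
  with lin show ?thesis by (simp add: bilinear_def)
qed

end

lemma has_derivative_along_line: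
  assumes D: "has_second_derivative_on f f' f'' U" and p: "p + s *\<^sub>R v \<in> U"
  shows "((\<lambda>s. f (p + s *\<^sub>R v)) has_derivative (\<lambda>t. t *\<^sub>R f' (p + s *\<^sub>R v) v)) (at s)"
proof -
  have "((\<lambda>s. p + s *\<^sub>R v) has_derivative (\<lambda>t. t *\<^sub>R v)) (at s)"
    by (auto intro!: derivative_eq_intros)
  from has_derivative_compose[OF this has_second_derivative_onD(2)[OF D p]]
  show ?thesis using linear_scale[OF has_second_derivative_on_linear[OF D p]] by simp
qed

lemma norm_increment_le:
  fixes g :: "real \<Rightarrow> 'b::real_inner"
  assumes "a < b" "\<And>s. s \<in> {a..b} \<Longrightarrow> (g has_derivative (\<lambda>t. t *\<^sub>R g' s)) (at s)"
    "\<And>s. s \<in> {a<..<b} \<Longrightarrow> norm (g' s) \<le> B"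
  shows "norm (g b - g a) \<le> B * (b - a)"
proof -
  have "continuous_on {a..b} g"
    using assms(2) by (intro has_derivative_continuous_on) (blast intro: has_derivative_at_withinI)
  then obtain x where x: "x \<in> {a<..<b}" "norm (g b - g a) \<le> norm ((b - a) *\<^sub>R g' x)"
    using mvt_general[OF assms(1), of g "\<lambda>s t. t *\<^sub>R g' s"] assms(2) by auto
  have "norm ((b - a) *\<^sub>R g' x) \<le> (b - a) * B"
    using assms(1) assms(3)[OF x(1)] by (simp add: mult_left_mono)
  with x(2) show ?thesis by (simp add: mult.commute)
qed

lemma linear_norm_le_Basis_bound:
  fixes g :: "'a::euclidean_space \<Rightarrow> 'b::real_normed_vector"
  assumes "linear g" "\<And>b. b \<in> Basis \<Longrightarrow> norm (g b) \<le> c"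
  shows "norm (g k) \<le> real DIM('a) * c * norm k"
proof -
  have "g k = (\<Sum>b\<in>Basis. (k \<bullet> b) *\<^sub>R g b)"
    using linear_sum[OF assms(1)] linear_scale[OF assms(1)] euclidean_representation[of k]
    by (metis (no_types, lifting) sum.cong)
  then have "norm (g k) \<le> (\<Sum>b\<in>Basis. norm ((k \<bullet> b) *\<^sub>R g b))"
    by (metis norm_sum)
  also have "\<dots> \<le> (\<Sum>b\<in>(Basis::'a set). norm k * c)"
  proof (rule sum_mono)
    fix b :: 'a assume "b \<in> Basis"
    then show "norm ((k \<bullet> b) *\<^sub>R g b) \<le> norm k * c"
      using assms(2) Basis_le_norm[of b k] by (simp add: mult_mono')
  qed
  finally show ?thesis by (simp add: algebra_simps)
qed

lemma first_order_remainder_bound: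
  assumes "(f has_derivative f') (at u)" "e > 0"
  shows "\<forall>\<^sub>F h in nhds 0. norm (f (u + h) - f u - f' h) \<le> e * norm h"
proof -
  obtain d where "d > 0" "\<forall>y. norm (y - u) < d \<longrightarrow> norm (f y - f u - f' (y - u)) \<le> e * norm (y - u)"
    using assms unfolding has_derivative_at_alt by blast
  then show ?thesis unfolding eventually_nhds_metric
    by (intro exI[of _ d]) (auto simp: dist_norm dest: spec[of _ "u + _"])
qed

context
  fixes f :: "'a::euclidean_space \<Rightarrow> 'b::euclidean_space" and f' f'' U u
  assumes D: "has_second_derivative_on f f' f'' U" and u: "u \<in> U"
begin

lemma first_derivative_remainder_bound:
  assumes e: "e > 0"
  shows "\<forall>\<^sub>F a in nhds u. a \<in> U \<and>
           (\<forall>k. norm (f' a k - f' u k - f'' u k (a - u)) \<le> e * norm (a - u) * norm k)"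
proof -
  define n where "n = real DIM('a)"
  have n: "n > 0" unfolding n_def by simp
  have "\<forall>\<^sub>F a in nhds u. norm (f' a b - f' u b - f'' u b (a - u)) \<le> (e / n) * norm (a - u)" for b
  proof -
    obtain d where "d > 0" "\<forall>a. norm (a - u) < d \<longrightarrow>
        norm (f' a b - f' u b - f'' u b (a - u)) \<le> (e / n) * norm (a - u)"
      using has_second_derivative_onD(3)[OF D u] e n unfolding has_derivative_at_alt
      by (meson divide_pos_pos)
    then show ?thesis unfolding eventually_nhds_metric by (metis dist_norm)
  qed
  then have "\<forall>\<^sub>F a in nhds u. \<forall>b\<in>Basis. norm (f' a b - f' u b - f'' u b (a - u)) \<le> (e / n) * norm (a - u)"
    by (simp add: eventually_ball_finite)
  moreover have "\<forall>\<^sub>F a in nhds u. a \<in> U"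
    using eventually_nhds_in_open has_second_derivative_onD(1)[OF D u] u by blast
  ultimately show ?thesis
  proof eventually_elim
    case (elim a)
    have "linear (\<lambda>k. f' a k - f' u k - f'' u k (a - u))"
      using has_second_derivative_on_linear[OF D] has_second_derivative_on_bilinear[OF D u] elim(2) u
      by (intro linear_compose_sub) (auto simp: bilinear_def)
    from linear_norm_le_Basis_bound[OF this, of "(e / n) * norm (a - u)"]
    show ?case using elim n by (simp add: n_def)
  qed
qed

lemma second_order_remainder_bound:
  assumes e: "e > 0"
  shows "\<forall>\<^sub>F h in nhds 0. norm (f (u + h) - f u - f' u h - (1/2) *\<^sub>R f'' u h h) \<le> e * (norm h)\<^sup>2"
proof -
  obtain d where d: "d > 0" and near: "\<And>a. dist a u < d \<Longrightarrow> a \<in> U \<and>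
      (\<forall>k. norm (f' a k - f' u k - f'' u k (a - u)) \<le> e * norm (a - u) * norm k)"
    using first_derivative_remainder_bound[OF e] unfolding eventually_nhds_metric by blast
  have "norm (f (u + h) - f u - f' u h - (1/2) *\<^sub>R f'' u h h) \<le> e * (norm h)\<^sup>2"
    if h: "norm h < d" for h
  proof -
    define r where "r s = f (u + s *\<^sub>R h) - f u - s *\<^sub>R f' u h - (s\<^sup>2/2) *\<^sub>R f'' u h h" for s
    define r' where "r' s = f' (u + s *\<^sub>R h) h - f' u h - s *\<^sub>R f'' u h h" for s
    have close: "dist (u + s *\<^sub>R h) u < d" if "s \<in> {0..1}" for s
      using that h by (simp add: dist_norm) (smt (verit) mult_left_le_one_le norm_ge_zero)
    have "(r has_derivative (\<lambda>t. t *\<^sub>R r' s)) (at s)" if "s \<in> {0..1}" for s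
    proof -
      have inU: "u + s *\<^sub>R h \<in> U" using near[OF close[OF that]] by blast
      have "((\<lambda>s. f (u + s *\<^sub>R h) - f u - s *\<^sub>R f' u h - (s\<^sup>2/2) *\<^sub>R f'' u h h) has_derivative
          (\<lambda>t. t *\<^sub>R f' (u + s *\<^sub>R h) h - 0 - t *\<^sub>R f' u h - (t * s) *\<^sub>R f'' u h h)) (at s)"
        by (rule has_derivative_along_line[OF D inU] derivative_eq_intros refl | simp)+
      then show ?thesis unfolding r_def r'_def
        by (rule has_derivative_eq_rhs) (auto simp: algebra_simps fun_eq_iff)
    qed
    moreover have "norm (r' s) \<le> e * (norm h)\<^sup>2" if "s \<in> {0<..<1}" for s
    proof -
      have "norm (f' (u + s *\<^sub>R h) h - f' u h - f'' u h (s *\<^sub>R h)) \<le> e * norm (s *\<^sub>R h) * norm h"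
        using near[OF close] that by simp
      also have "\<dots> \<le> e * (norm h)\<^sup>2" using that e
        by (simp add: power2_eq_square mult_left_le_one_le mult_right_le_one_le mult_le_cancel_left1)
      finally show ?thesis
        unfolding r'_def using bilinear_rmul[OF has_second_derivative_on_bilinear[OF D u]] by simp
    qed
    ultimately have "norm (r 1 - r 0) \<le> e * (norm h)\<^sup>2 * (1 - 0)"
      by (intro norm_increment_le) auto
    then show ?thesis unfolding r_def by simp
  qed
  then show ?thesis unfolding eventually_nhds_metric using d by (auto simp: dist_norm)
qed

lemma derivative_difference_bound:
  assumes near: "\<And>a. dist a u < d \<Longrightarrow> a \<in> U \<and>
               (\<forall>k. norm (f' a k - f' u k - f'' u k (a - u)) \<le> e * norm (a - u) * norm k)"
    and p: "dist p u < d" and q: "dist q u < d"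
  shows "norm (f' p k - f' q k - f'' u k (p - q)) \<le> e * (norm (p - u) + norm (q - u)) * norm k"
proof -
  have "f'' u k (p - q) = f'' u k (p - u) - f'' u k (q - u)"
    using bilinear_rsub[OF has_second_derivative_on_bilinear[OF D u]] by (metis diff_diff_eq2 diff_add_cancel add_diff_cancel_right')
  then have "f' p k - f' q k - f'' u k (p - q)
      = (f' p k - f' u k - f'' u k (p - u)) - (f' q k - f' u k - f'' u k (q - u))"
    by (simp add: algebra_simps)
  then have "norm (f' p k - f' q k - f'' u k (p - q))
      \<le> norm (f' p k - f' u k - f'' u k (p - u)) + norm (f' q k - f' u k - f'' u k (q - u))"
    by (simp only: norm_triangle_ineq4)
  moreover have "norm (f' p k - f' u k - f'' u k (p - u)) \<le> e * norm (p - u) * norm k"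
    using near[OF p] by blast
  moreover have "norm (f' q k - f' u k - f'' u k (q - u)) \<le> e * norm (q - u) * norm k"
    using near[OF q] by blast
  ultimately show ?thesis by (simp add: algebra_simps)
qed

lemma second_difference_estimate:
  assumes e: "e \<ge> 0" and near: "\<And>a. dist a u < d \<Longrightarrow> a \<in> U \<and>
               (\<forall>k. norm (f' a k - f' u k - f'' u k (a - u)) \<le> e * norm (a - u) * norm k)"
    and t: "t > 0" "t * (norm v + norm w) < d"
  shows "norm ((f (u + t *\<^sub>R v + t *\<^sub>R w) - f (u + t *\<^sub>R v) - f (u + t *\<^sub>R w) + f u)
                 - (t * t) *\<^sub>R f'' u v w)
         \<le> e * (t * (norm w + 2 * norm v) * norm v) * t"
proof -
  define k where "k s = f (u + t *\<^sub>R w + s *\<^sub>R v) - f (u + s *\<^sub>R v) - (s * t) *\<^sub>R f'' u v w" for s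
  define k' where "k' s = f' (u + t *\<^sub>R w + s *\<^sub>R v) v - f' (u + s *\<^sub>R v) v - t *\<^sub>R f'' u v w" for s
  have bounds: "norm (t *\<^sub>R w + s *\<^sub>R v) \<le> t * norm w + s * norm v" "norm (s *\<^sub>R v) \<le> s * norm v"
    "t * norm w + s * norm v < d" "s * norm v < d" if "s \<in> {0..t}" for s
  proof -
    have "s * norm v \<le> t * norm v" "0 \<le> t * norm w" using that t by (auto intro: mult_right_mono)
    then show "t * norm w + s * norm v < d" "s * norm v < d" using t by (simp_all add: algebra_simps)
      (smt (verit) norm_ge_zero zero_le_mult_iff)
    show "norm (t *\<^sub>R w + s *\<^sub>R v) \<le> t * norm w + s * norm v" "norm (s *\<^sub>R v) \<le> s * norm v"
      using that t norm_triangle_ineq[of "t *\<^sub>R w" "s *\<^sub>R v"] by auto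
  qed
  have close: "dist (u + t *\<^sub>R w + s *\<^sub>R v) u < d" "dist (u + s *\<^sub>R v) u < d" if "s \<in> {0..t}" for s
    using bounds[OF that] by (simp_all add: dist_norm add.assoc)
  have "(k has_derivative (\<lambda>r. r *\<^sub>R k' s)) (at s)" if "s \<in> {0..t}" for s
  proof -
    have in1: "u + t *\<^sub>R w + s *\<^sub>R v \<in> U" and in2: "u + s *\<^sub>R v \<in> U"
      using near[OF close(1)[OF that]] near[OF close(2)[OF that]] by auto
    have "((\<lambda>s. f (u + t *\<^sub>R w + s *\<^sub>R v) - f (u + s *\<^sub>R v) - (s * t) *\<^sub>R f'' u v w) has_derivative
        (\<lambda>r. r *\<^sub>R f' (u + t *\<^sub>R w + s *\<^sub>R v) v - r *\<^sub>R f' (u + s *\<^sub>R v) v - (r * t) *\<^sub>R f'' u v w)) (at s)"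
      by (rule has_derivative_along_line[OF D in1] has_derivative_along_line[OF D in2]
          derivative_eq_intros refl | simp)+
    then show ?thesis unfolding k_def k'_def
      by (rule has_derivative_eq_rhs) (auto simp: algebra_simps fun_eq_iff)
  qed
  moreover have "norm (k' s) \<le> e * (t * (norm w + 2 * norm v) * norm v)" if s: "s \<in> {0<..<t}" for s
  proof -
    have s': "s \<in> {0..t}" using s by auto
    have "norm (k' s) \<le> e * (norm (t *\<^sub>R w + s *\<^sub>R v) + norm (s *\<^sub>R v)) * norm v"
      using derivative_difference_bound[OF near close[OF s'], of v]
      by (simp add: k'_def bilinear_rmul[OF has_second_derivative_on_bilinear[OF D u]])
    also have "\<dots> \<le> e * (t * (norm w + 2 * norm v)) * norm v"
      using bounds(1,2)[OF s'] s e mult_right_mono[of s t "norm v"]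
      by (intro mult_right_mono mult_left_mono) (auto simp: algebra_simps)
    finally show ?thesis by (simp add: algebra_simps)
  qed
  ultimately have "norm (k t - k 0) \<le> e * (t * (norm w + 2 * norm v) * norm v) * (t - 0)"
    using t by (intro norm_increment_le) auto
  then show ?thesis unfolding k_def by (simp add: algebra_simps)
qed

text \<open>Symmetry needs only differentiability of f' on the open set, not continuity of f'':
  the mean value theorem compares one second difference with both t^2 f'' u v w and t^2 f'' u w v.\<close>

lemma second_derivative_asymmetry_bound:
  assumes e: "e > 0"
  shows "norm (f'' u v w - f'' u w v) \<le> e * ((norm w + 2 * norm v) * norm v + (norm v + 2 * norm w) * norm w)"
proof -
  obtain d where d: "d > 0" and near: "\<And>a. dist a u < d \<Longrightarrow> a \<in> U \<and>
      (\<forall>k. norm (f' a k - f' u k - f'' u k (a - u)) \<le> e * norm (a - u) * norm k)"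
    using first_derivative_remainder_bound[OF e] unfolding eventually_nhds_metric by blast
  define c where "c = 2 * (norm v + norm w + 1)"
  have c: "c > 0" "norm v + norm w < c" unfolding c_def by (smt (verit) norm_ge_zero)+
  define t where "t = d / c"
  have "t > 0" "t * c = d" unfolding t_def using c d by auto
  moreover from this have "t * (norm v + norm w) < d" using c by (metis mult_strict_left_mono)
  ultimately have t: "t > 0" "t * (norm v + norm w) < d" "t * (norm w + norm v) < d"
    by (simp_all add: add.commute)
  define \<Delta> where "\<Delta> = f (u + t *\<^sub>R v + t *\<^sub>R w) - f (u + t *\<^sub>R v) - f (u + t *\<^sub>R w) + f u"
  have "\<Delta> = f (u + t *\<^sub>R w + t *\<^sub>R v) - f (u + t *\<^sub>R w) - f (u + t *\<^sub>R v) + f u"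
    unfolding \<Delta>_def by (simp add: algebra_simps)
  then have wv: "norm (\<Delta> - (t * t) *\<^sub>R f'' u w v) \<le> e * (t * (norm v + 2 * norm w) * norm w) * t"
    using second_difference_estimate[OF less_imp_le[OF e] near t(1,3)] by simp
  have vw: "norm (\<Delta> - (t * t) *\<^sub>R f'' u v w) \<le> e * (t * (norm w + 2 * norm v) * norm v) * t"
    unfolding \<Delta>_def by (rule second_difference_estimate[OF less_imp_le[OF e] near t(1,2)])
  have "(t * t) *\<^sub>R (f'' u v w - f'' u w v)
      = (\<Delta> - (t * t) *\<^sub>R f'' u w v) - (\<Delta> - (t * t) *\<^sub>R f'' u v w)"
    by (simp add: algebra_simps)
  then have "norm ((t * t) *\<^sub>R (f'' u v w - f'' u w v))
      \<le> norm (\<Delta> - (t * t) *\<^sub>R f'' u w v) + norm (\<Delta> - (t * t) *\<^sub>R f'' u v w)"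
    by (simp only: norm_triangle_ineq4)
  also have "\<dots> \<le> e * (t * (norm v + 2 * norm w) * norm w) * t + e * (t * (norm w + 2 * norm v) * norm v) * t"
    using wv vw by (rule add_mono)
  also have "\<dots> = (t * t) * (e * ((norm w + 2 * norm v) * norm v + (norm v + 2 * norm w) * norm w))"
    by (simp add: algebra_simps)
  finally have "(t * t) * norm (f'' u v w - f'' u w v)
      \<le> (t * t) * (e * ((norm w + 2 * norm v) * norm v + (norm v + 2 * norm w) * norm w))"
    using t(1) by simp
  then show ?thesis using t(1) by (simp add: mult_le_cancel_left_pos)
qed

lemma second_derivative_symmetric: "f'' u v w = f'' u w v"
proof -
  define M where "M = (norm w + 2 * norm v) * norm v + (norm v + 2 * norm w) * norm w"
  have M: "M \<ge> 0" unfolding M_def by simp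
  have "norm (f'' u v w - f'' u w v) \<le> e" if "e > 0" for e
  proof -
    have "norm (f'' u v w - f'' u w v) \<le> e / (M + 1) * M"
      using second_derivative_asymmetry_bound[of "e / (M + 1)"] M that unfolding M_def by simp
    also have "\<dots> \<le> e" using M that by (simp add: field_simps)
    finally show ?thesis .
  qed
  then show ?thesis using field_le_epsilon[of "norm (f'' u v w - f'' u w v)" 0] by simp
qed

end

section \<open>Expansions along curves\<close>

lemma tendsto_zero_little_o:
  fixes R :: "'c \<Rightarrow> 'b::real_normed_vector" and h :: "'c \<Rightarrow> 'a::real_normed_vector"
  assumes R: "\<And>e. e > 0 \<Longrightarrow> \<forall>\<^sub>F t in F. norm (R t) \<le> e * norm (h t) ^ n"
    and h: "\<forall>\<^sub>F t in F. norm (h t) \<le> C * \<bar>s t\<bar>" and s: "\<forall>\<^sub>F t in F. s t \<noteq> 0"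
  shows "((\<lambda>t. R t /\<^sub>R s t ^ n) \<longlongrightarrow> 0) F"
  unfolding tendsto_iff
proof (intro allI impI)
  fix e :: real assume e: "e > 0"
  define C' where "C' = \<bar>C\<bar> + 1"
  have C': "C' > 0" unfolding C'_def by simp
  have e': "e / (2 * C' ^ n) > 0" using e C' by simp
  show "\<forall>\<^sub>F t in F. dist (R t /\<^sub>R s t ^ n) 0 < e"
    using R[OF e'] h s
  proof eventually_elim
    case (elim t)
    have "norm (h t) \<le> C' * \<bar>s t\<bar>"
      using elim(2) by (smt (verit, best) C'_def abs_ge_zero abs_ge_self mult_right_mono)
    then have "norm (h t) ^ n \<le> C' ^ n * \<bar>s t\<bar> ^ n" by (metis norm_ge_zero power_mono power_mult_distrib)
    then have "norm (R t) \<le> e / (2 * C' ^ n) * (C' ^ n * \<bar>s t\<bar> ^ n)"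
      using elim(1) e' by (meson mult_left_mono less_imp_le order_trans)
    also have "\<dots> = e / 2 * \<bar>s t\<bar> ^ n" using C' by simp
    finally have "norm (R t) / \<bar>s t\<bar> ^ n \<le> e / 2"
      using elim(3) by (simp add: pos_divide_le_eq)
    moreover have "norm (R t /\<^sub>R s t ^ n) = norm (R t) / \<bar>s t\<bar> ^ n"
      by (simp add: divide_inverse_commute power_abs)
    ultimately show ?case using e by (simp only: dist_norm diff_zero)
  qed
qed

lemma eventually_norm_le_of_tendsto_quotient:
  fixes h :: "'c \<Rightarrow> 'a::real_normed_vector"
  assumes "((\<lambda>t. h t /\<^sub>R s t) \<longlongrightarrow> v) F" "\<forall>\<^sub>F t in F. s t \<noteq> 0"
  shows "\<forall>\<^sub>F t in F. norm (h t) \<le> (norm v + 1) * \<bar>s t\<bar>"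
  using assms(2) tendstoD[OF assms(1) zero_less_one]
proof eventually_elim
  case (elim t)
  then have "norm (h t) / \<bar>s t\<bar> \<le> norm v + 1"
    using norm_triangle_ineq2[of "h t /\<^sub>R s t" v] by (simp add: dist_norm divide_inverse_commute)
  with elim(1) show ?case by (simp add: pos_divide_le_eq)
qed

lemma second_order_expansion_along:
  assumes D: "has_second_derivative_on f f' f'' U" and u: "u \<in> U"
    and h: "(h \<longlongrightarrow> 0) F" and q: "((\<lambda>t. h t /\<^sub>R s t) \<longlongrightarrow> v) F" and s: "\<forall>\<^sub>F t in F. s t \<noteq> 0"
  shows "((\<lambda>t. (f (u + h t) - f u - f' u (h t)) /\<^sub>R s t ^ 2) \<longlongrightarrow> (1/2) *\<^sub>R f'' u v v) F"
proof -
  have bil: "bilinear (f'' u)" by (rule has_second_derivative_on_bilinear[OF D u])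
  have "((\<lambda>t. (f (u + h t) - f u - f' u (h t) - (1/2) *\<^sub>R f'' u (h t) (h t)) /\<^sub>R s t ^ 2) \<longlongrightarrow> 0) F"
    by (rule tendsto_zero_little_o[OF _ eventually_norm_le_of_tendsto_quotient[OF q s] s])
      (rule eventually_compose_filterlim[OF second_order_remainder_bound[OF D u] h])
  moreover have "((\<lambda>t. (1/2) *\<^sub>R f'' u (h t /\<^sub>R s t) (h t /\<^sub>R s t)) \<longlongrightarrow> (1/2) *\<^sub>R f'' u v v) F"
    using bil bounded_bilinear.tendsto[OF _ q q]
    by (intro tendsto_scaleR tendsto_const) (auto simp: bilinear_conv_bounded_bilinear)
  ultimately have "((\<lambda>t. (f (u + h t) - f u - f' u (h t) - (1/2) *\<^sub>R f'' u (h t) (h t)) /\<^sub>R s t ^ 2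
      + (1/2) *\<^sub>R f'' u (h t /\<^sub>R s t) (h t /\<^sub>R s t)) \<longlongrightarrow> 0 + (1/2) *\<^sub>R f'' u v v) F"
    by (rule tendsto_add)
  then show ?thesis
    by (simp add: bilinear_lmul[OF bil] bilinear_rmul[OF bil] power2_eq_square algebra_simps)
qed

lemma lifted_curve_velocity:
  fixes f :: "'a::euclidean_space \<Rightarrow> 'b::euclidean_space"
  assumes f: "(f has_derivative L) (at u)" and inj: "inj L" and F: "F \<noteq> bot"
    and s: "\<forall>\<^sub>F t in F. s t \<noteq> 0" and h: "(h \<longlongrightarrow> 0) F"
    and lift: "\<forall>\<^sub>F t in F. f (u + h t) = \<gamma> t"
    and \<gamma>: "((\<lambda>t. (\<gamma> t - f u) /\<^sub>R s t) \<longlongrightarrow> X) F"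
  obtains v where "L v = X" "((\<lambda>t. h t /\<^sub>R s t) \<longlongrightarrow> v) F"
proof -
  have linL: "linear L" using f has_derivative_linear by blast
  obtain c where c: "c > 0" "\<And>z. c * norm z \<le> norm (L z)"
    using linear_inj_bounded_below_pos[OF linL inj] by blast
  obtain G where G: "linear G" "G \<circ> L = id"
    using linear_injective_left_inverse[OF linL inj] by blast
  have GL: "G (L z) = z" for z using G(2) by (metis comp_apply id_apply)
  have rem: "\<forall>\<^sub>F t in F. norm (\<gamma> t - f u - L (h t)) \<le> e * norm (h t) ^ 1" if "e > 0" for e
    using eventually_compose_filterlim[OF first_order_remainder_bound[OF f that] h] lift
    by eventually_elim simp
  have bound: "\<forall>\<^sub>F t in F. norm (h t) \<le> (2 * (norm X + 1) / c) * \<bar>s t\<bar>"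
    using rem[OF half_gt_zero[OF c(1)]] eventually_norm_le_of_tendsto_quotient[OF \<gamma> s]
  proof eventually_elim
    case (elim t)
    have "L (h t) = (\<gamma> t - f u) - (\<gamma> t - f u - L (h t))" by simp
    then have "norm (L (h t)) \<le> norm (\<gamma> t - f u) + norm (\<gamma> t - f u - L (h t))"
      by (metis norm_triangle_ineq4)
    moreover have "c * norm (h t) \<le> norm (L (h t))" by (rule c(2))
    ultimately have "c * norm (h t) \<le> 2 * ((norm X + 1) * \<bar>s t\<bar>)"
      using elim by (simp only: power_one_right)
    then show ?case using c(1) by (simp add: pos_le_divide_eq algebra_simps)
  qed
  have "((\<lambda>t. (\<gamma> t - f u - L (h t)) /\<^sub>R s t ^ 1) \<longlongrightarrow> 0) F"
    by (rule tendsto_zero_little_o[OF rem bound s])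
  from tendsto_diff[OF \<gamma> this] have Lq: "((\<lambda>t. L (h t /\<^sub>R s t)) \<longlongrightarrow> X) F"
    by (simp add: linear_scale[OF linL] scaleR_diff_right)
  have "X \<in> range L"
    using closed_subspace[OF linear_subspace_image[OF linL subspace_UNIV]]
    by (intro Lim_in_closed_set[OF _ _ F Lq]) auto
  then obtain z where "X = L z" by blast
  then have LGX: "L (G X) = X" by (simp only: GL)
  have "bounded_linear G" using G(1) by (simp add: linear_conv_bounded_linear)
  from bounded_linear.tendsto[OF this Lq] have "((\<lambda>t. h t /\<^sub>R s t) \<longlongrightarrow> G X) F"
    by (simp only: GL)
  with LGX show thesis by (rule that)
qed

lemma first_order_expansion_along:
  assumes f: "(f has_derivative L) (at u)"
    and h: "(h \<longlongrightarrow> 0) F" and q: "((\<lambda>t. h t /\<^sub>R s t) \<longlongrightarrow> v) F" and s: "\<forall>\<^sub>F t in F. s t \<noteq> 0"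
  shows "((\<lambda>t. (f (u + h t) - f u) /\<^sub>R s t) \<longlongrightarrow> L v) F"
proof -
  have lin: "bounded_linear L" using f by (rule has_derivative_bounded_linear)
  have "((\<lambda>t. (f (u + h t) - f u - L (h t)) /\<^sub>R s t ^ 1) \<longlongrightarrow> 0) F"
    by (rule tendsto_zero_little_o[OF _ eventually_norm_le_of_tendsto_quotient[OF q s] s])
      (use eventually_compose_filterlim[OF first_order_remainder_bound[OF f] h] in simp)
  from tendsto_add[OF this bounded_linear.tendsto[OF lin q]] show ?thesis
    by (simp add: linear_scale[OF bounded_linear.linear[OF lin]] scaleR_diff_right)
qed

lemma scaled_line_tendsto:
  fixes v :: "'a::real_normed_vector"
  shows "((\<lambda>t. t *\<^sub>R v) \<longlongrightarrow> 0) (at 0)" "((\<lambda>t. (t *\<^sub>R v) /\<^sub>R t) \<longlongrightarrow> v) (at 0)"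
  using tendsto_scaleR[OF tendsto_ident_at[of 0 UNIV] tendsto_const[of v]]
  by (auto intro: tendsto_eventually simp: eventually_at_filter)

lemma chart_transition_curve:
  assumes D1: "has_second_derivative_on \<phi>1 f1' f1'' U1" and u1: "u1 \<in> U1"
    and H1: "homeomorphism U1 (N \<inter> W1) \<phi>1 \<psi>1"
    and D2: "has_second_derivative_on \<phi>2 f2' f2'' U2" and u2: "u2 \<in> U2"
    and H2: "homeomorphism U2 (N \<inter> W2) \<phi>2 \<psi>2" and W2: "open W2" and inj2: "inj (f2' u2)"
    and y: "\<phi>1 u1 = \<phi>2 u2"
  obtains h v2 where "(h \<longlongrightarrow> 0) (at 0)" "\<forall>\<^sub>F t in at 0. \<phi>2 (u2 + h t) = \<phi>1 (u1 + t *\<^sub>R v1)"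
    "((\<lambda>t. h t /\<^sub>R t) \<longlongrightarrow> v2) (at 0)" "f2' u2 v2 = f1' u1 v1"
proof -
  define \<gamma> where "\<gamma> t = \<phi>1 (u1 + t *\<^sub>R v1)" for t :: real
  define h where "h t = \<psi>2 (\<gamma> t) - u2" for t
  have line: "((\<lambda>t. u1 + t *\<^sub>R v1) \<longlongrightarrow> u1) (at 0)"
    by (auto intro!: tendsto_eq_intros)
  have "\<forall>\<^sub>F t in at 0. u1 + t *\<^sub>R v1 \<in> U1"
    using topological_tendstoD[OF line has_second_derivative_onD(1)[OF D1 u1] u1] .
  then have inN: "\<forall>\<^sub>F t in at 0. \<gamma> t \<in> N"
    using H1 unfolding \<gamma>_def homeomorphism_def by (auto elim: eventually_mono)
  have "isCont \<phi>1 u1" using has_second_derivative_onD(2)[OF D1 u1] by (rule has_derivative_continuous)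
  then have \<gamma>_lim: "(\<gamma> \<longlongrightarrow> \<phi>2 u2) (at 0)"
    unfolding \<gamma>_def y[symmetric] by (rule isCont_tendsto_compose[OF _ line])
  have y2: "\<phi>2 u2 \<in> N \<inter> W2" "\<psi>2 (\<phi>2 u2) = u2" using H2 u2 unfolding homeomorphism_def by auto
  have inNW2: "\<forall>\<^sub>F t in at 0. \<gamma> t \<in> N \<inter> W2"
    using inN topological_tendstoD[OF \<gamma>_lim W2] y2(1) by (auto elim: eventually_elim2)
  have "((\<lambda>t. \<psi>2 (\<gamma> t)) \<longlongrightarrow> u2) (at 0)"
    using continuous_on_tendsto_compose[OF _ \<gamma>_lim y2(1) inNW2] H2 y2(2)
    unfolding homeomorphism_def by metis
  then have h_lim: "(h \<longlongrightarrow> 0) (at 0)"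
    unfolding h_def using tendsto_diff[OF _ tendsto_const[of u2]] by fastforce
  have lift: "\<forall>\<^sub>F t in at 0. \<phi>2 (u2 + h t) = \<gamma> t"
    using inNW2 H2 unfolding h_def homeomorphism_def by (auto elim: eventually_mono)
  have nz: "\<forall>\<^sub>F t in at (0::real). t \<noteq> 0" by (simp add: eventually_at_filter)
  have "((\<lambda>t. (\<gamma> t - \<phi>2 u2) /\<^sub>R t) \<longlongrightarrow> f1' u1 v1) (at 0)"
    using first_order_expansion_along[OF has_second_derivative_onD(2)[OF D1 u1] scaled_line_tendsto nz]
    unfolding \<gamma>_def y .
  with lifted_curve_velocity[OF has_second_derivative_onD(2)[OF D2 u2] inj2 at_neq_bot nz h_lim lift]
  obtain v2 where "f2' u2 v2 = f1' u1 v1" "((\<lambda>t. h t /\<^sub>R t) \<longlongrightarrow> v2) (at 0)" by blast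
  with h_lim lift show thesis unfolding \<gamma>_def by (intro that)
qed

lemma second_derivatives_eq_mod_range:
  fixes P :: "'b::euclidean_space \<Rightarrow> 'e::real_normed_vector"
  assumes D1: "has_second_derivative_on f1 f1' f1'' U1" and u1: "u1 \<in> U1"
    and D2: "has_second_derivative_on f2 f2' f2'' U2" and u2: "u2 \<in> U2"
    and F: "F \<noteq> bot" and s: "\<forall>\<^sub>F t in F. s t \<noteq> 0"
    and h1: "(h1 \<longlongrightarrow> 0) F" "((\<lambda>t. h1 t /\<^sub>R s t) \<longlongrightarrow> v1) F"
    and h2: "(h2 \<longlongrightarrow> 0) F" "((\<lambda>t. h2 t /\<^sub>R s t) \<longlongrightarrow> v2) F"
    and lift: "\<forall>\<^sub>F t in F. f1 (u1 + h1 t) = f2 (u2 + h2 t)" and y: "f1 u1 = f2 u2"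
    and P: "linear P" "\<And>z. P (f1' u1 z) = 0" "\<And>z. P (f2' u2 z) = 0"
  shows "P (f1'' u1 v1 v1) = P (f2'' u2 v2 v2)"
proof -
  have bl: "bounded_linear P" using P(1) by (simp add: linear_conv_bounded_linear)
  have lim1: "((\<lambda>t. P ((f1 (u1 + h1 t) - f1 u1 - f1' u1 (h1 t)) /\<^sub>R s t ^ 2))
      \<longlongrightarrow> P ((1/2) *\<^sub>R f1'' u1 v1 v1)) F"
    by (rule bounded_linear.tendsto[OF bl second_order_expansion_along[OF D1 u1 h1 s]])
  have lim2: "((\<lambda>t. P ((f2 (u2 + h2 t) - f2 u2 - f2' u2 (h2 t)) /\<^sub>R s t ^ 2))
      \<longlongrightarrow> P ((1/2) *\<^sub>R f2'' u2 v2 v2)) F"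
    by (rule bounded_linear.tendsto[OF bl second_order_expansion_along[OF D2 u2 h2 s]])
  have "\<forall>\<^sub>F t in F. P ((f2 (u2 + h2 t) - f2 u2 - f2' u2 (h2 t)) /\<^sub>R s t ^ 2)
      = P ((f1 (u1 + h1 t) - f1 u1 - f1' u1 (h1 t)) /\<^sub>R s t ^ 2)"
    using lift by eventually_elim (simp add: y P linear_diff[OF P(1)] linear_scale[OF P(1)])
  from tendsto_unique[OF F Lim_transform_eventually[OF lim2 this] lim1]
  show ?thesis by (simp add: linear_scale[OF P(1)])
qed

lemma chart_second_derivatives_eq_mod_range:
  fixes P :: "'b::euclidean_space \<Rightarrow> 'e::real_normed_vector"
  assumes D1: "has_second_derivative_on \<phi>1 f1' f1'' U1" and u1: "u1 \<in> U1"
    and H1: "homeomorphism U1 (N \<inter> W1) \<phi>1 \<psi>1"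
    and D2: "has_second_derivative_on \<phi>2 f2' f2'' U2" and u2: "u2 \<in> U2"
    and H2: "homeomorphism U2 (N \<inter> W2) \<phi>2 \<psi>2" and W2: "open W2" and inj2: "inj (f2' u2)"
    and y: "\<phi>1 u1 = \<phi>2 u2"
    and P: "linear P" "\<And>z. P (f1' u1 z) = 0" "\<And>z. P (f2' u2 z) = 0"
    and ab: "f2' u2 b = f1' u1 a"
  shows "P (f1'' u1 a a) = P (f2'' u2 b b)"
proof -
  obtain h b' where h: "(h \<longlongrightarrow> 0) (at 0)" "\<forall>\<^sub>F t in at 0. \<phi>2 (u2 + h t) = \<phi>1 (u1 + t *\<^sub>R a)"
    "((\<lambda>t. h t /\<^sub>R t) \<longlongrightarrow> b') (at 0)" and b': "f2' u2 b' = f1' u1 a"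
    by (rule chart_transition_curve[OF D1 u1 H1 D2 u2 H2 W2 inj2 y])
  have "b' = b" using injD[OF inj2] ab b' by metis
  have nz: "\<forall>\<^sub>F t in at (0::real). t \<noteq> 0" by (simp add: eventually_at_filter)
  have lift: "\<forall>\<^sub>F t in at 0. \<phi>1 (u1 + t *\<^sub>R a) = \<phi>2 (u2 + h t)"
    using h(2) by (simp add: eq_commute)
  show ?thesis unfolding \<open>b' = b\<close>[symmetric]
    by (rule second_derivatives_eq_mod_range[OF D1 u1 D2 u2 at_neq_bot nz scaled_line_tendsto
          h(1,3) lift y P])
qed

section \<open>Charts and the second fundamental form\<close>

definition normal_component :: "'a::euclidean_space set \<Rightarrow> 'a \<Rightarrow> 'a" where
  "normal_component T z = z - closest_point T z"

context
  fixes T :: "'a::euclidean_space set"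
  assumes T: "subspace T"
begin

lemma closest_point_in_subspace: "closest_point T z \<in> T"
  using closest_point_exists[OF closed_subspace[OF T]] subspace_0[OF T] by auto

lemma closest_point_subspace_orthogonal:
  assumes t: "t \<in> T"
  shows "(z - closest_point T z) \<bullet> t = 0"
proof -
  have cvx: "convex T" "closed T" using subspace_imp_convex[OF T] closed_subspace[OF T] by auto
  note cT = closest_point_in_subspace[of z]
  have "(z - closest_point T z) \<bullet> ((closest_point T z + s *\<^sub>R t) - closest_point T z) \<le> 0" for s
    using subspace_add[OF T cT subspace_scale[OF T t]] by (rule closest_point_dot[OF cvx])
  from this[of 1] this[of "-1"] show ?thesis by simp
qed

lemma closest_point_subspace_eq:
  assumes p: "p \<in> T" and orth: "\<And>t. t \<in> T \<Longrightarrow> (z - p) \<bullet> t = 0"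
  shows "closest_point T z = p"
proof -
  define c where "c = closest_point T z"
  have d: "p - c \<in> T" using subspace_diff[OF T p closest_point_in_subspace] unfolding c_def .
  have "(p - c) \<bullet> (p - c) = (z - c) \<bullet> (p - c) - (z - p) \<bullet> (p - c)"
    by (simp add: inner_diff_left)
  also have "\<dots> = 0" using closest_point_subspace_orthogonal[OF d] orth[OF d] unfolding c_def by simp
  finally show ?thesis unfolding c_def[symmetric] by simp
qed

lemma normal_component_orthogonal: "t \<in> T \<Longrightarrow> normal_component T z \<bullet> t = 0"
  unfolding normal_component_def by (rule closest_point_subspace_orthogonal)

lemma normal_component_eq_0:
  assumes "t \<in> T"
  shows "normal_component T t = 0"
proof -
  have "closest_point T t = t" using assms by (intro closest_point_subspace_eq) auto
  then show ?thesis unfolding normal_component_def by simp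
qed

lemma linear_normal_component: "linear (normal_component T)"
proof (rule linearI)
  fix a b :: 'a and r :: real
  note cT = closest_point_in_subspace and orth = closest_point_subspace_orthogonal
  have "closest_point T (a + b) = closest_point T a + closest_point T b"
  proof (rule closest_point_subspace_eq)
    show "closest_point T a + closest_point T b \<in> T" by (rule subspace_add[OF T cT cT])
    fix t assume "t \<in> T"
    then show "(a + b - (closest_point T a + closest_point T b)) \<bullet> t = 0"
      using orth[of t a] orth[of t b] by (simp add: algebra_simps inner_diff_left inner_add_left)
  qed
  then show "normal_component T (a + b) = normal_component T a + normal_component T b"
    unfolding normal_component_def by simp
  have "closest_point T (r *\<^sub>R a) = r *\<^sub>R closest_point T a"
  proof (rule closest_point_subspace_eq)
    show "r *\<^sub>R closest_point T a \<in> T" by (rule subspace_scale[OF T cT])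
    fix t assume "t \<in> T"
    then show "(r *\<^sub>R a - r *\<^sub>R closest_point T a) \<bullet> t = 0"
      using orth[of t a] by (simp add: scaleR_diff_right[symmetric])
  qed
  then show "normal_component T (r *\<^sub>R a) = r *\<^sub>R normal_component T a"
    unfolding normal_component_def by (simp add: scaleR_diff_right)
qed

end

lemma polarization_eq:
  assumes b1: "bilinear b1" "\<And>v w. b1 v w = b1 w v" and b2: "bilinear b2" "\<And>v w. b2 v w = b2 w v"
    and P: "linear P" and L: "linear L1" "linear L2"
    and diag: "\<And>a b. L2 b = L1 a \<Longrightarrow> P (b1 a a) = P (b2 b b)"
    and v: "L2 v2 = L1 v1" and w: "L2 w2 = L1 w1"
  shows "P (b1 v1 w1) = P (b2 v2 w2)"
proof -
  have "L2 (v2 + w2) = L1 (v1 + w1)" using v w L by (simp add: linear_add)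
  from diag[OF this] have "P (b1 v1 v1) + 2 *\<^sub>R P (b1 v1 w1) + P (b1 w1 w1) =
      P (b2 v2 v2) + 2 *\<^sub>R P (b2 v2 w2) + P (b2 w2 w2)"
    using b1 b2 by (simp add: bilinear_ladd bilinear_radd linear_add[OF P] linear_scale[OF P]
        scaleR_2 algebra_simps)
  then show ?thesis using diag[OF v] diag[OF w] by simp
qed

lemma is_chartE:
  assumes "is_chart N U \<phi>"
  obtains f' f'' W \<psi> where "has_second_derivative_on \<phi> f' f'' U" "\<And>u. u \<in> U \<Longrightarrow> inj (f' u)"
    "open W" "homeomorphism U (N \<inter> W) \<phi> \<psi>"
proof -
  obtain f' f'' where D: "has_second_derivative_on \<phi> f' f'' U"
    using assms smooth_on_imp_has_second_derivative_on unfolding is_chart_def by metis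
  moreover have "\<And>u. u \<in> U \<Longrightarrow> inj (f' u)"
    using assms has_second_derivative_on_frechet[OF D] unfolding is_chart_def by auto
  ultimately show thesis using assms that unfolding is_chart_def by blast
qed

lemma tangent_space_chart:
  fixes N :: "(real^'q) set" and U :: "(real^'k::finite) set"
  assumes ch: "is_chart N U \<phi>" and u: "u \<in> U" and y: "\<phi> u = y"
  shows "tangent_space TYPE('k) N y = range (frechet_derivative \<phi> (at u))"
proof
  show "range (frechet_derivative \<phi> (at u)) \<subseteq> tangent_space TYPE('k) N y"
    unfolding tangent_space_def using ch u y by blast
  show "tangent_space TYPE('k) N y \<subseteq> range (frechet_derivative \<phi> (at u))"
  proof
    fix X assume "X \<in> tangent_space TYPE('k) N y"
    then obtain U1 :: "(real^'k) set" and \<phi>1 u1 v1 where ch1: "is_chart N U1 \<phi>1" and u1: "u1 \<in> U1"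
      and y1: "\<phi>1 u1 = y" and X: "X = frechet_derivative \<phi>1 (at u1) v1"
      unfolding tangent_space_def by blast
    obtain f1' f1'' W1 \<psi>1 where D1: "has_second_derivative_on \<phi>1 f1' f1'' U1"
      and H1: "homeomorphism U1 (N \<inter> W1) \<phi>1 \<psi>1"
      using is_chartE[OF ch1] by metis
    obtain f' f'' W \<psi> where D: "has_second_derivative_on \<phi> f' f'' U" and inj: "\<And>u. u \<in> U \<Longrightarrow> inj (f' u)"
      and W: "open W" and H: "homeomorphism U (N \<inter> W) \<phi> \<psi>"
      using is_chartE[OF ch] by metis
    obtain h v where "f' u v = f1' u1 v1"
      using chart_transition_curve[OF D1 u1 H1 D u H W inj[OF u]] y y1 by metis
    then show "X \<in> range (frechet_derivative \<phi> (at u))"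
      using X has_second_derivative_on_frechet[OF D u] has_second_derivative_on_frechet[OF D1 u1]
      by (metis rangeI)
  qed
qed

lemma subspace_tangent_space:
  fixes N :: "(real^'q) set" and U :: "(real^'k::finite) set"
  assumes ch: "is_chart N U \<phi>" and u: "u \<in> U" and y: "\<phi> u = y"
  shows "subspace (tangent_space TYPE('k) N y)"
proof -
  obtain f' f'' W \<psi> where D: "has_second_derivative_on \<phi> f' f'' U"
    using is_chartE[OF ch] by metis
  show ?thesis unfolding tangent_space_chart[OF ch u y] has_second_derivative_on_frechet[OF D u]
    by (rule linear_subspace_image[OF has_second_derivative_on_linear[OF D u] subspace_UNIV])
qed

lemma normal_d2_chart_invariant:
  fixes N :: "(real^'q) set" and U1 U2 :: "(real^'k::finite) set"
  assumes ch1: "is_chart N U1 \<phi>1" and u1: "u1 \<in> U1" and y1: "\<phi>1 u1 = y"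
    and ch2: "is_chart N U2 \<phi>2" and u2: "u2 \<in> U2" and y2: "\<phi>2 u2 = y"
    and v: "frechet_derivative \<phi>1 (at u1) v1 = frechet_derivative \<phi>2 (at u2) v2"
    and w: "frechet_derivative \<phi>1 (at u1) w1 = frechet_derivative \<phi>2 (at u2) w2"
  shows "normal_component (tangent_space TYPE('k) N y) (d2 \<phi>1 u1 v1 w1)
       = normal_component (tangent_space TYPE('k) N y) (d2 \<phi>2 u2 v2 w2)"
proof -
  obtain f1' f1'' W1 \<psi>1 where D1: "has_second_derivative_on \<phi>1 f1' f1'' U1"
    and H1: "homeomorphism U1 (N \<inter> W1) \<phi>1 \<psi>1"
    using is_chartE[OF ch1] by metis
  obtain f2' f2'' W2 \<psi>2 where D2: "has_second_derivative_on \<phi>2 f2' f2'' U2"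
    and inj: "\<And>u. u \<in> U2 \<Longrightarrow> inj (f2' u)" and W2: "open W2" and H2: "homeomorphism U2 (N \<inter> W2) \<phi>2 \<psi>2"
    using is_chartE[OF ch2] by metis
  define T where "T = tangent_space TYPE('k) N y"
  have T: "subspace T" unfolding T_def by (rule subspace_tangent_space[OF ch2 u2 y2])
  have T1: "T = range (f1' u1)"
    unfolding T_def tangent_space_chart[OF ch1 u1 y1] has_second_derivative_on_frechet[OF D1 u1] ..
  have T2: "T = range (f2' u2)"
    unfolding T_def tangent_space_chart[OF ch2 u2 y2] has_second_derivative_on_frechet[OF D2 u2] ..
  have P1: "normal_component T (f1' u1 z) = 0" for z
    by (rule normal_component_eq_0[OF T]) (simp add: T1)
  have P2: "normal_component T (f2' u2 z) = 0" for z
    by (rule normal_component_eq_0[OF T]) (simp add: T2)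
  note diag = chart_second_derivatives_eq_mod_range[OF D1 u1 H1 D2 u2 H2 W2 inj[OF u2] _
      linear_normal_component[OF T] P1 P2]
  have "f2' u2 v2 = f1' u1 v1" "f2' u2 w2 = f1' u1 w1"
    using v w has_second_derivative_on_frechet[OF D1 u1] has_second_derivative_on_frechet[OF D2 u2]
    by simp_all
  then have "normal_component T (f1'' u1 v1 w1) = normal_component T (f2'' u2 v2 w2)"
    using polarization_eq[OF has_second_derivative_on_bilinear[OF D1 u1] second_derivative_symmetric[OF D1 u1]
        has_second_derivative_on_bilinear[OF D2 u2] second_derivative_symmetric[OF D2 u2]
        linear_normal_component[OF T] has_second_derivative_on_linear[OF D1 u1]
        has_second_derivative_on_linear[OF D2 u2]] diag y1 y2
    by simp
  then show ?thesis
    unfolding T_def has_second_derivative_on_d2[OF D1 u1] has_second_derivative_on_d2[OF D2 u2] .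
qed

lemma sff_R_chart:
  fixes N :: "(real^'q) set" and U :: "(real^'k::finite) set"
  assumes ch: "is_chart N U \<phi>" and u: "u \<in> U" and y: "\<phi> u = y"
  shows "sff_R TYPE('k) N y (frechet_derivative \<phi> (at u) v) (frechet_derivative \<phi> (at u) w)
       = normal_component (tangent_space TYPE('k) N y) (d2 \<phi> u v w)"
  unfolding sff_R_def
proof (rule some_equality)
  show "\<exists>(U'::(real^'k) set) \<phi>' u' v' w'. is_chart N U' \<phi>' \<and> u' \<in> U' \<and> \<phi>' u' = y \<and>
      frechet_derivative \<phi>' (at u') v' = frechet_derivative \<phi> (at u) v \<and>
      frechet_derivative \<phi>' (at u') w' = frechet_derivative \<phi> (at u) w \<and>
      normal_component (tangent_space TYPE('k) N y) (d2 \<phi> u v w)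
        = d2 \<phi>' u' v' w' - closest_point (tangent_space TYPE('k) N y) (d2 \<phi>' u' v' w')"
    using ch u y unfolding normal_component_def by blast
next
  fix b assume "\<exists>(U'::(real^'k) set) \<phi>' u' v' w'. is_chart N U' \<phi>' \<and> u' \<in> U' \<and> \<phi>' u' = y \<and>
      frechet_derivative \<phi>' (at u') v' = frechet_derivative \<phi> (at u) v \<and>
      frechet_derivative \<phi>' (at u') w' = frechet_derivative \<phi> (at u) w \<and>
      b = d2 \<phi>' u' v' w' - closest_point (tangent_space TYPE('k) N y) (d2 \<phi>' u' v' w')"
  then obtain U' :: "(real^'k) set" and \<phi>' u' v' w' where "is_chart N U' \<phi>'" "u' \<in> U'" "\<phi>' u' = y"
      "frechet_derivative \<phi>' (at u') v' = frechet_derivative \<phi> (at u) v"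
      "frechet_derivative \<phi>' (at u') w' = frechet_derivative \<phi> (at u) w"
      "b = normal_component (tangent_space TYPE('k) N y) (d2 \<phi>' u' v' w')"
    unfolding normal_component_def by blast
  then show "b = normal_component (tangent_space TYPE('k) N y) (d2 \<phi> u v w)"
    using normal_d2_chart_invariant[OF _ _ _ ch u y] by metis
qed

section \<open>Submanifolds of the unit sphere\<close>

lemma has_derivative_locally_constant:
  assumes "(g has_derivative g') (at a)" "open U" "a \<in> U" "\<And>x. x \<in> U \<Longrightarrow> g x = c"
  shows "g' = (\<lambda>_. 0)"
proof -
  have "((\<lambda>x. c) has_derivative g') (at a)"
    by (rule has_derivative_transform_within_open[OF assms(1-3)]) (simp add: assms(4))
  then show ?thesis using has_derivative_unique[OF _ has_derivative_const] by blast
qed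

context
  fixes \<phi> :: "'a::euclidean_space \<Rightarrow> 'b::euclidean_space" and f' f'' U
  assumes D: "has_second_derivative_on \<phi> f' f'' U" and sphere: "\<phi> ` U \<subseteq> sphere 0 1"
begin

lemma sphere_chart_tangent_orthogonal:
  assumes a: "a \<in> U"
  shows "f' a v \<bullet> \<phi> a = 0"
proof -
  have "((\<lambda>x. \<phi> x \<bullet> \<phi> x) has_derivative (\<lambda>h. \<phi> a \<bullet> f' a h + f' a h \<bullet> \<phi> a)) (at a)"
    using has_second_derivative_onD(2)[OF D a] has_second_derivative_onD(2)[OF D a]
    by (rule has_derivative_inner)
  moreover have "\<phi> x \<bullet> \<phi> x = 1" if "x \<in> U" for x
    using sphere that by (auto simp: norm_eq_1)
  ultimately have "(\<lambda>h. \<phi> a \<bullet> f' a h + f' a h \<bullet> \<phi> a) = (\<lambda>_. 0)"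
    using has_derivative_locally_constant has_second_derivative_onD(1)[OF D a] a by blast
  then show ?thesis by (metis inner_commute mult_2 mult_eq_0_iff zero_neq_numeral)
qed

lemma sphere_chart_second_derivative_inner:
  assumes u: "u \<in> U"
  shows "f'' u v w \<bullet> \<phi> u = - (f' u v \<bullet> f' u w)"
proof -
  have "((\<lambda>x. f' x v \<bullet> \<phi> x) has_derivative (\<lambda>h. f' u v \<bullet> f' u h + f'' u v h \<bullet> \<phi> u)) (at u)"
    using has_second_derivative_onD(3)[OF D u] has_second_derivative_onD(2)[OF D u]
    by (rule has_derivative_inner)
  then have "(\<lambda>h. f' u v \<bullet> f' u h + f'' u v h \<bullet> \<phi> u) = (\<lambda>_. 0)"
    using has_derivative_locally_constant has_second_derivative_onD(1)[OF D u] u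
      sphere_chart_tangent_orthogonal by blast
  then show ?thesis by (metis add_eq_0_iff)
qed

end

lemma is_chart_image: "is_chart N U \<phi> \<Longrightarrow> \<phi> ` U \<subseteq> N"
  unfolding is_chart_def homeomorphism_def by auto

lemma submanifold_chartE:
  assumes "submanifold TYPE('k::finite) N" "y \<in> N"
  obtains U :: "(real^'k) set" and \<phi> u where "is_chart N U \<phi>" "u \<in> U" "\<phi> u = y"
  using assms unfolding submanifold_def by (metis imageE)

lemma bilinear_compose_linear:
  assumes "bilinear \<beta>" "linear G" "linear M"
  shows "bilinear (\<lambda>X Y. M (\<beta> (G X) (G Y)))"
proof -
  have "linear (M \<circ> (\<lambda>Y. \<beta> (G X) Y) \<circ> G)" "linear (M \<circ> (\<lambda>X. \<beta> X (G Y)) \<circ> G)" for X Y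
    using assms by (auto simp: bilinear_def intro!: linear_compose)
  then show ?thesis by (simp add: bilinear_def o_def)
qed

lemma linear_reject: "linear (\<lambda>z. z - (z \<bullet> y) *\<^sub>R y)"
  by (rule linearI) (simp_all add: inner_add_left algebra_simps)

context
  fixes N :: "(real^'q) set"
  assumes N: "submanifold TYPE('k::finite) N" "N \<subseteq> sphere 0 1"
begin

lemma tangent_space_orthogonal_sphere:
  assumes y: "y \<in> N" and X: "X \<in> tangent_space TYPE('k) N y"
  shows "X \<bullet> y = 0"
proof -
  obtain U :: "(real^'k) set" and \<phi> u where ch: "is_chart N U \<phi>" and u: "u \<in> U" and yu: "\<phi> u = y"
    using submanifold_chartE[OF N(1) y] .
  obtain f' f'' W \<psi> where D: "has_second_derivative_on \<phi> f' f'' U"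
    using is_chartE[OF ch] by metis
  obtain v where "X = f' u v"
    using X unfolding tangent_space_chart[OF ch u yu] has_second_derivative_on_frechet[OF D u] by blast
  then show ?thesis
    using sphere_chart_tangent_orthogonal[OF D _ u] is_chart_image[OF ch] N(2) yu by blast
qed

lemma sff_R_inner_sphere:
  assumes y: "y \<in> N" and X: "X \<in> tangent_space TYPE('k) N y" and Y: "Y \<in> tangent_space TYPE('k) N y"
  shows "sff_R TYPE('k) N y X Y \<bullet> y = - (X \<bullet> Y)"
proof -
  obtain U :: "(real^'k) set" and \<phi> u where ch: "is_chart N U \<phi>" and u: "u \<in> U" and yu: "\<phi> u = y"
    using submanifold_chartE[OF N(1) y] .
  obtain f' f'' W \<psi> where D: "has_second_derivative_on \<phi> f' f'' U"
    using is_chartE[OF ch] by metis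
  define T where "T = tangent_space TYPE('k) N y"
  have T: "subspace T" unfolding T_def by (rule subspace_tangent_space[OF ch u yu])
  obtain v w where v: "X = f' u v" and w: "Y = f' u w"
    using X Y unfolding tangent_space_chart[OF ch u yu] has_second_derivative_on_frechet[OF D u] by blast
  have "sff_R TYPE('k) N y X Y = normal_component T (f'' u v w)"
    using sff_R_chart[OF ch u yu] unfolding v w T_def has_second_derivative_on_frechet[OF D u]
      has_second_derivative_on_d2[OF D u] by metis
  also have "\<dots> \<bullet> y = f'' u v w \<bullet> y"
    using tangent_space_orthogonal_sphere[OF y closest_point_in_subspace[OF T, unfolded T_def]]
    unfolding normal_component_def T_def by (simp add: inner_diff_left)
  also have "\<dots> = - (X \<bullet> Y)"
    using sphere_chart_second_derivative_inner[OF D _ u] is_chart_image[OF ch] N(2) yu v w by blast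
  finally show ?thesis .
qed

lemma sff_R_eq_sff_S:
  assumes "y \<in> N" "X \<in> tangent_space TYPE('k) N y" "Y \<in> tangent_space TYPE('k) N y"
  shows "sff_R TYPE('k) N y X Y = sff_S TYPE('k) N y X Y - (X \<bullet> Y) *\<^sub>R y"
  using sff_R_inner_sphere[OF assms] by (simp add: sff_S_def)

lemma sff_S_bilinear_extension:
  assumes y: "y \<in> N"
  obtains b where "bilinear b" "\<And>X Y. b X Y \<bullet> y = 0"
    "\<And>X Y. X \<in> tangent_space TYPE('k) N y \<Longrightarrow> Y \<in> tangent_space TYPE('k) N y \<Longrightarrow>
       b X Y = sff_S TYPE('k) N y X Y"
proof -
  obtain U :: "(real^'k) set" and \<phi> u where ch: "is_chart N U \<phi>" and u: "u \<in> U" and yu: "\<phi> u = y"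
    using submanifold_chartE[OF N(1) y] .
  obtain f' f'' W \<psi> where D: "has_second_derivative_on \<phi> f' f'' U" and inj: "\<And>u. u \<in> U \<Longrightarrow> inj (f' u)"
    using is_chartE[OF ch] by metis
  define T where "T = tangent_space TYPE('k) N y"
  have T: "subspace T" unfolding T_def by (rule subspace_tangent_space[OF ch u yu])
  have T_range: "T = range (f' u)"
    unfolding T_def tangent_space_chart[OF ch u yu] has_second_derivative_on_frechet[OF D u] ..
  obtain G where G: "linear G" "G \<circ> f' u = id"
    using linear_injective_left_inverse[OF has_second_derivative_on_linear[OF D u] inj[OF u]] by blast
  define M where "M z = normal_component T z - (normal_component T z \<bullet> y) *\<^sub>R y" for z
  have "linear M"
    using linear_compose[OF linear_normal_component[OF T] linear_reject[of y]]
    unfolding M_def o_def .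
  then have "bilinear (\<lambda>X Y. M (f'' u (G X) (G Y)))"
    using bilinear_compose_linear has_second_derivative_on_bilinear[OF D u] G(1) by blast
  moreover have "M z \<bullet> y = 0" for z
    using N(2) y by (simp add: M_def inner_diff_left subset_iff norm_eq_1)
  moreover have "M (f'' u (G X) (G Y)) = sff_S TYPE('k) N y X Y" if "X \<in> T" "Y \<in> T" for X Y
  proof -
    have "f' u (G X) = X" "f' u (G Y) = Y"
      using that G(2) unfolding T_range by (auto simp: pointfree_idE)
    then show ?thesis
      using sff_R_chart[OF ch u yu, of "G X" "G Y"]
      unfolding sff_S_def M_def T_def has_second_derivative_on_frechet[OF D u]
        has_second_derivative_on_d2[OF D u] by simp
  qed
  ultimately show thesis unfolding T_def by (rule that)
qed

end

section \<open>The inclusion into R^Q\<close>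

lemma Ck_on_component: "Ck_on n f U \<Longrightarrow> Ck_on n (\<lambda>u. f u $ j) U"
proof (induction n arbitrary: f)
  case 0
  then show ?case by (simp add: continuous_on_component)
next
  case (Suc n)
  then obtain f' where f': "\<forall>u\<in>U. (f has_derivative f' u) (at u)" and "\<forall>v. Ck_on n (\<lambda>u. f' u v) U"
    by auto
  then have "\<forall>v. Ck_on n (\<lambda>u. f' u v $ j) U" using Suc.IH by blast
  moreover have "\<forall>u\<in>U. ((\<lambda>u. f u $ j) has_derivative (\<lambda>v. f' u v $ j)) (at u)"
    using f' bounded_linear.has_derivative[OF bounded_linear_vec_nth] by blast
  ultimately show ?case by auto
qed

lemma smooth_on_component: "smooth_on f U \<Longrightarrow> smooth_on (\<lambda>u. f u $ j) U"
  unfolding smooth_on_def using Ck_on_component by blast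

lemma frechet_derivative_component:
  fixes f :: "'a::euclidean_space \<Rightarrow> real^'n"
  assumes D: "has_second_derivative_on f f' f'' U" and u: "u \<in> U"
  shows "frechet_derivative (\<lambda>a. f a $ j) (at u) = (\<lambda>v. f' u v $ j)"
  using bounded_linear.has_derivative[OF bounded_linear_vec_nth has_second_derivative_onD(2)[OF D u]]
    frechet_derivative_at by metis

lemma d2_component:
  fixes f :: "'a::euclidean_space \<Rightarrow> real^'n"
  assumes D: "has_second_derivative_on f f' f'' U" and u: "u \<in> U"
  shows "d2 (\<lambda>a. f a $ j) u v w = f'' u v w $ j"
proof -
  have "((\<lambda>a. f' a v $ j) has_derivative (\<lambda>w. f'' u v w $ j)) (at u)"
    using bounded_linear.has_derivative[OF bounded_linear_vec_nth has_second_derivative_onD(3)[OF D u]] .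
  then have "((\<lambda>a. frechet_derivative (\<lambda>a. f a $ j) (at a) v) has_derivative (\<lambda>w. f'' u v w $ j)) (at u)"
    by (rule has_derivative_transform_within_open[OF _ has_second_derivative_onD(1)[OF D u] u])
      (simp add: frechet_derivative_component[OF D])
  then show ?thesis unfolding d2_def using frechet_derivative_at by metis
qed

definition pad_vec :: "(nat \<Rightarrow> 'q::finite) \<Rightarrow> real^'q \<Rightarrow> nat \<Rightarrow> real" where
  "pad_vec ix z = (\<lambda>i. if i < CARD('q) then z $ ix i else 0)"

lemma pad_vec_diff: "(\<lambda>i. pad_vec ix a i - pad_vec ix b i) = pad_vec ix (a - b)"
  by (auto simp: pad_vec_def fun_eq_iff)

lemma dF_pad_vec:
  fixes \<phi> :: "real^'k::finite \<Rightarrow> real^'q" and ix :: "nat \<Rightarrow> 'q"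
  assumes ch: "is_chart N U \<phi>" and u: "u \<in> U"
  shows "dF CARD('q) (pad_vec ix) \<phi> u v = pad_vec ix (frechet_derivative \<phi> (at u) v)"
proof -
  obtain f' f'' W \<psi> where D: "has_second_derivative_on \<phi> f' f'' U" using is_chartE[OF ch] by metis
  show ?thesis
    by (auto simp: fun_eq_iff dF_def pad_vec_def frechet_derivative_component[OF D u]
        has_second_derivative_on_frechet[OF D u])
qed

lemma d2F_pad_vec:
  fixes \<phi> :: "real^'k::finite \<Rightarrow> real^'q" and ix :: "nat \<Rightarrow> 'q"
  assumes ch: "is_chart N U \<phi>" and u: "u \<in> U"
  shows "d2F CARD('q) (pad_vec ix) \<phi> u v w = pad_vec ix (d2 \<phi> u v w)"
proof -
  obtain f' f'' W \<psi> where D: "has_second_derivative_on \<phi> f' f'' U" using is_chartE[OF ch] by metis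
  show ?thesis
    by (auto simp: fun_eq_iff d2F_def pad_vec_def d2_component[OF D u] has_second_derivative_on_d2[OF D u])
qed

context
  fixes ix :: "nat \<Rightarrow> 'q::finite"
  assumes ix: "bij_betw ix {..<CARD('q)} UNIV"
begin

lemma innerQ_pad_vec: "innerQ CARD('q) (pad_vec ix a) (pad_vec ix b) = a \<bullet> b"
proof -
  have "innerQ CARD('q) (pad_vec ix a) (pad_vec ix b) = (\<Sum>i<CARD('q). a $ ix i * b $ ix i)"
    unfolding innerQ_def pad_vec_def by simp
  also have "\<dots> = (\<Sum>j\<in>UNIV. a $ j * b $ j)"
    using sum.reindex_bij_betw[OF ix, of "\<lambda>j. a $ j * b $ j"] by simp
  finally show ?thesis by (simp add: inner_vec_def)
qed

lemma inj_pad_vec: "inj (pad_vec ix)"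
proof (rule injI)
  fix a b assume eq: "pad_vec ix a = pad_vec ix b"
  have "a $ ix i = b $ ix i" if "i < CARD('q)" for i
    using fun_cong[OF eq, of i] that by (simp add: pad_vec_def)
  moreover have "\<exists>i<CARD('q). j = ix i" for j
    using ix unfolding bij_betw_def by (metis UNIV_I imageE lessThan_iff)
  ultimately show "a = b" by (metis vec_eq_iff)
qed

lemma range_pad_vec: "(\<forall>i\<ge>CARD('q). n i = 0) \<Longrightarrow> n \<in> range (pad_vec ix)"
proof -
  assume n: "\<forall>i\<ge>CARD('q). n i = 0"
  have "n = pad_vec ix (\<chi> j. n (inv_into {..<CARD('q)} ix j))"
    using ix n by (auto simp: pad_vec_def fun_eq_iff bij_betw_inv_into_left)
  then show ?thesis by blast
qed

lemma perpQ_pad_vec: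
  assumes T: "subspace T"
  shows "perpQ CARD('q) (pad_vec ix ` T) (pad_vec ix z) = pad_vec ix (normal_component T z)"
  unfolding perpQ_def
proof (rule the_equality)
  have "z - normal_component T z \<in> T"
    unfolding normal_component_def using closest_point_in_subspace[OF T] by simp
  then show "(\<forall>i\<ge>CARD('q). pad_vec ix (normal_component T z) i = 0) \<and>
    (\<forall>s\<in>pad_vec ix ` T. innerQ CARD('q) (pad_vec ix (normal_component T z)) s = 0) \<and>
    (\<lambda>i. pad_vec ix z i - pad_vec ix (normal_component T z) i) \<in> pad_vec ix ` T"
    using normal_component_orthogonal[OF T]
    by (auto simp: innerQ_pad_vec pad_vec_diff) (simp add: pad_vec_def)
next
  fix n assume n: "(\<forall>i\<ge>CARD('q). n i = 0) \<and> (\<forall>s\<in>pad_vec ix ` T. innerQ CARD('q) n s = 0) \<and>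
      (\<lambda>i. pad_vec ix z i - n i) \<in> pad_vec ix ` T"
  obtain m where m: "n = pad_vec ix m" using range_pad_vec n by blast
  have "z - m \<in> T" using n inj_pad_vec unfolding m pad_vec_diff by (auto dest: injD)
  moreover have "\<And>s. s \<in> T \<Longrightarrow> (z - (z - m)) \<bullet> s = 0" using n innerQ_pad_vec unfolding m by auto
  ultimately have "closest_point T z = z - m" by (rule closest_point_subspace_eq[OF T])
  then show "n = pad_vec ix (normal_component T z)" unfolding m normal_component_def by simp
qed

lemma isometric_immersion_pad_vec: "isometric_immersion TYPE('k::finite) N CARD('q) (pad_vec ix)"
  unfolding isometric_immersion_def
proof (intro conjI allI impI ballI)
  fix y i assume "CARD('q) \<le> i"
  then show "pad_vec ix y i = 0" by (simp add: pad_vec_def)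
next
  fix U :: "(real^'k) set" and \<phi> assume ch: "is_chart N U \<phi>"
  show "smooth_on (\<lambda>u. pad_vec ix (\<phi> u) i) U" if "i < CARD('q)" for i
    using smooth_on_component[of \<phi> U "ix i"] ch that by (simp add: is_chart_def pad_vec_def)
  show "innerQ CARD('q) (dF CARD('q) (pad_vec ix) \<phi> u v) (dF CARD('q) (pad_vec ix) \<phi> u w) =
      frechet_derivative \<phi> (at u) v \<bullet> frechet_derivative \<phi> (at u) w" if "u \<in> U" for u v w
    using that by (simp add: dF_pad_vec[OF ch] innerQ_pad_vec)
qed

lemma sff_F_pad_vec:
  fixes N :: "(real^'q) set"
  assumes N: "submanifold TYPE('k::finite) N" and y: "y \<in> N"
    and X: "X \<in> tangent_space TYPE('k) N y" and Y: "Y \<in> tangent_space TYPE('k) N y"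
  shows "sff_F TYPE('k) N CARD('q) (pad_vec ix) y X Y = pad_vec ix (sff_R TYPE('k) N y X Y)"
proof -
  have perp: "perpQ CARD('q) (range (dF CARD('q) (pad_vec ix) \<phi> u)) (d2F CARD('q) (pad_vec ix) \<phi> u v w)
      = pad_vec ix (sff_R TYPE('k) N y (frechet_derivative \<phi> (at u) v) (frechet_derivative \<phi> (at u) w))"
    if ch: "is_chart N U \<phi>" and u: "u \<in> U" and yu: "\<phi> u = y" for U :: "(real^'k) set" and \<phi> u v w
  proof -
    have "range (dF CARD('q) (pad_vec ix) \<phi> u) = pad_vec ix ` tangent_space TYPE('k) N y"
      unfolding tangent_space_chart[OF ch u yu] dF_pad_vec[OF ch u] by auto
    then show ?thesis
      unfolding d2F_pad_vec[OF ch u] sff_R_chart[OF ch u yu]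
      using perpQ_pad_vec[OF subspace_tangent_space[OF ch u yu]] by simp
  qed
  obtain U :: "(real^'k) set" and \<phi> u where ch: "is_chart N U \<phi>" and u: "u \<in> U" and yu: "\<phi> u = y"
    using submanifold_chartE[OF N y] .
  obtain v w where v: "X = frechet_derivative \<phi> (at u) v" and w: "Y = frechet_derivative \<phi> (at u) w"
    using X Y unfolding tangent_space_chart[OF ch u yu] by blast
  show ?thesis unfolding sff_F_def
  proof (rule some_equality)
    show "\<exists>(U::(real^'k) set) \<phi> u v w. is_chart N U \<phi> \<and> u \<in> U \<and> \<phi> u = y \<and>
        frechet_derivative \<phi> (at u) v = X \<and> frechet_derivative \<phi> (at u) w = Y \<and>
        pad_vec ix (sff_R TYPE('k) N y X Y)
          = perpQ CARD('q) (range (dF CARD('q) (pad_vec ix) \<phi> u)) (d2F CARD('q) (pad_vec ix) \<phi> u v w)"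
      using ch u yu perp[OF ch u yu, of v w] unfolding v w
      by (intro exI[of _ U] exI[of _ \<phi>] exI[of _ u] exI[of _ v] exI[of _ w]) simp
  next
    fix b assume "\<exists>(U::(real^'k) set) \<phi> u v w. is_chart N U \<phi> \<and> u \<in> U \<and> \<phi> u = y \<and>
        frechet_derivative \<phi> (at u) v = X \<and> frechet_derivative \<phi> (at u) w = Y \<and>
        b = perpQ CARD('q) (range (dF CARD('q) (pad_vec ix) \<phi> u)) (d2F CARD('q) (pad_vec ix) \<phi> u v w)"
    then show "b = pad_vec ix (sff_R TYPE('k) N y X Y)" using perp by blast
  qed
qed

end

section \<open>The algebraic estimate\<close>

lemma norm_sum_scaleR_squared_le:
  fixes v :: "'i \<Rightarrow> 'v::real_normed_vector"
  shows "(norm (\<Sum>i\<in>I. a i *\<^sub>R v i))\<^sup>2 \<le> (\<Sum>i\<in>I. (a i)\<^sup>2) * (\<Sum>i\<in>I. (norm (v i))\<^sup>2)"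
proof -
  have "norm (\<Sum>i\<in>I. a i *\<^sub>R v i) \<le> (\<Sum>i\<in>I. \<bar>a i\<bar> * norm (v i))"
    using norm_sum[of "\<lambda>i. a i *\<^sub>R v i" I] by simp
  then have "(norm (\<Sum>i\<in>I. a i *\<^sub>R v i))\<^sup>2 \<le> (\<Sum>i\<in>I. \<bar>a i\<bar> * norm (v i))\<^sup>2"
    by (intro power_mono) auto
  also have "\<dots> \<le> (\<Sum>i\<in>I. \<bar>a i\<bar>\<^sup>2) * (\<Sum>i\<in>I. (norm (v i))\<^sup>2)"
    by (rule Cauchy_Schwarz_ineq_sum)
  finally show ?thesis by simp
qed

lemma orthonormal_expansion:
  fixes e :: "'k::finite \<Rightarrow> 'v::real_inner"
  assumes orth: "\<And>i j. e i \<bullet> e j = (if i = j then 1 else 0)" and x: "x \<in> span (range e)"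
  shows "x = (\<Sum>i\<in>UNIV. (x \<bullet> e i) *\<^sub>R e i)"
proof -
  have "inj e" using orth by (metis injI zero_neq_one)
  moreover have "(\<Sum>i\<in>range e. (x \<bullet> i) *\<^sub>R i) = x"
    using orth x by (intro orthonormal_basis_expand) (auto simp: pairwise_def orthogonal_def norm_eq_1)
  ultimately show ?thesis by (simp add: sum.reindex)
qed

context
  fixes b :: "'v::real_inner \<Rightarrow> 'v \<Rightarrow> 'v" and e :: "'k::finite \<Rightarrow> 'v" and x :: 'v
  assumes b: "bilinear b"
    and orth: "\<And>i j. e i \<bullet> e j = (if i = j then 1 else 0)"
    and x: "x \<in> span (range e)" "norm x = 1"
begin

lemma sum_inner_basis_squared: "(\<Sum>i\<in>UNIV. (x \<bullet> e i)\<^sup>2) = 1"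
proof -
  have "x \<bullet> x = x \<bullet> (\<Sum>i\<in>UNIV. (x \<bullet> e i) *\<^sub>R e i)"
    using orthonormal_expansion[OF orth x(1)] by simp
  then show ?thesis using x(2) by (simp add: inner_sum_right power2_eq_square dot_square_norm)
qed

lemma bilinear_expand_left: "b x z = (\<Sum>i\<in>UNIV. (x \<bullet> e i) *\<^sub>R b (e i) z)"
proof -
  have lin: "linear (\<lambda>X. b X z)" using b by (simp add: bilinear_def)
  have "b x z = b (\<Sum>i\<in>UNIV. (x \<bullet> e i) *\<^sub>R e i) z"
    using orthonormal_expansion[OF orth x(1)] by (rule arg_cong)
  also have "\<dots> = (\<Sum>i\<in>UNIV. (x \<bullet> e i) *\<^sub>R b (e i) z)"
    by (simp add: linear_sum[OF lin] linear_scale[OF lin])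
  finally show ?thesis .
qed

lemma bilinear_expand_right: "b z x = (\<Sum>i\<in>UNIV. (x \<bullet> e i) *\<^sub>R b z (e i))"
proof -
  have lin: "linear (b z)" using b by (simp add: bilinear_def)
  have "b z x = b z (\<Sum>i\<in>UNIV. (x \<bullet> e i) *\<^sub>R e i)"
    using orthonormal_expansion[OF orth x(1)] by (rule arg_cong)
  also have "\<dots> = (\<Sum>i\<in>UNIV. (x \<bullet> e i) *\<^sub>R b z (e i))"
    by (simp add: linear_sum[OF lin] linear_scale[OF lin])
  finally show ?thesis .
qed

lemma sum_norm_sff_unit_le: "(\<Sum>\<beta>\<in>UNIV. (norm (b x (e \<beta>)))\<^sup>2) \<le> (\<Sum>i\<in>UNIV. \<Sum>j\<in>UNIV. (norm (b (e i) (e j)))\<^sup>2)"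
proof -
  have "(norm (b x (e \<beta>)))\<^sup>2 \<le> (\<Sum>i\<in>UNIV. (norm (b (e i) (e \<beta>)))\<^sup>2)" for \<beta>
    using norm_sum_scaleR_squared_le[of "\<lambda>i. x \<bullet> e i" "\<lambda>i. b (e i) (e \<beta>)" UNIV,
        folded bilinear_expand_left, unfolded sum_inner_basis_squared]
    by simp
  then have "(\<Sum>\<beta>\<in>UNIV. (norm (b x (e \<beta>)))\<^sup>2) \<le> (\<Sum>\<beta>\<in>UNIV. \<Sum>i\<in>UNIV. (norm (b (e i) (e \<beta>)))\<^sup>2)"
    by (rule sum_mono)
  also have "\<dots> = (\<Sum>i\<in>UNIV. \<Sum>\<beta>\<in>UNIV. (norm (b (e i) (e \<beta>)))\<^sup>2)"
    by (rule sum.swap)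
  finally show ?thesis .
qed

lemma inner_sff_mean_curvature_ge:
  "- (b x x \<bullet> (\<Sum>\<beta>\<in>UNIV. b (e \<beta>) (e \<beta>)))
     \<le> sqrt (real CARD('k)) * (\<Sum>i\<in>UNIV. \<Sum>j\<in>UNIV. (norm (b (e i) (e j)))\<^sup>2)"
proof -
  define S where "S = (\<Sum>i\<in>UNIV. \<Sum>j\<in>UNIV. (norm (b (e i) (e j)))\<^sup>2)"
  define H where "H = (\<Sum>\<beta>\<in>UNIV. b (e \<beta>) (e \<beta>))"
  have S: "S \<ge> 0" unfolding S_def by (intro sum_nonneg) auto
  have "(norm (b x x))\<^sup>2 \<le> (\<Sum>\<beta>\<in>UNIV. (norm (b x (e \<beta>)))\<^sup>2)"
    using norm_sum_scaleR_squared_le[of "\<lambda>i. x \<bullet> e i" "\<lambda>i. b x (e i)" UNIV,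
        folded bilinear_expand_right, unfolded sum_inner_basis_squared]
    by simp
  then have "(norm (b x x))\<^sup>2 \<le> S"
    using sum_norm_sff_unit_le unfolding S_def by linarith
  then have bxx: "norm (b x x) \<le> sqrt S" by (simp add: real_le_rsqrt)
  have "(\<Sum>\<beta>\<in>UNIV. (norm (b (e \<beta>) (e \<beta>)))\<^sup>2) \<le> S"
    unfolding S_def by (intro sum_mono member_le_sum) auto
  then have "real CARD('k) * (\<Sum>\<beta>\<in>UNIV. (norm (b (e \<beta>) (e \<beta>)))\<^sup>2) \<le> real CARD('k) * S"
    by (rule mult_left_mono) simp
  moreover have "(norm H)\<^sup>2 \<le> real CARD('k) * (\<Sum>\<beta>\<in>UNIV. (norm (b (e \<beta>) (e \<beta>)))\<^sup>2)"
    using norm_sum_scaleR_squared_le[of "\<lambda>_. 1" "\<lambda>\<beta>. b (e \<beta>) (e \<beta>)" UNIV]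
    unfolding H_def by simp
  ultimately have "(norm H)\<^sup>2 \<le> real CARD('k) * S" by linarith
  then have H: "norm H \<le> sqrt (real CARD('k)) * sqrt S"
    by (simp add: real_le_rsqrt flip: real_sqrt_mult)
  have "- (b x x \<bullet> H) \<le> norm (b x x) * norm H"
    using Cauchy_Schwarz_ineq2[of "b x x" H] by (simp add: abs_le_iff)
  also have "\<dots> \<le> sqrt S * (sqrt (real CARD('k)) * sqrt S)"
    using bxx H S by (intro mult_mono) auto
  also have "\<dots> = sqrt (real CARD('k)) * S" using S by (simp add: algebra_simps)
  finally show ?thesis unfolding S_def H_def .
qed

lemma SSU_sum_negative:
  assumes y: "y \<bullet> y = 1" "\<And>X Y. b X Y \<bullet> y = 0"
    and S: "(\<Sum>i\<in>UNIV. \<Sum>j\<in>UNIV. (norm (b (e i) (e j)))\<^sup>2)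
              < (real CARD('k) - 4) / (sqrt (real CARD('k)) + 4)"
  shows "(\<Sum>\<beta>\<in>UNIV. 4 * ((b x (e \<beta>) - (x \<bullet> e \<beta>) *\<^sub>R y) \<bullet> (b x (e \<beta>) - (x \<bullet> e \<beta>) *\<^sub>R y))
            - (b x x - (x \<bullet> x) *\<^sub>R y) \<bullet> (b (e \<beta>) (e \<beta>) - (e \<beta> \<bullet> e \<beta>) *\<^sub>R y)) < 0"
proof -
  define k where "k = real CARD('k)"
  define S where "S = (\<Sum>i\<in>UNIV. \<Sum>j\<in>UNIV. (norm (b (e i) (e j)))\<^sup>2)"
  have xx: "x \<bullet> x = 1" using x(2) by (simp add: dot_square_norm)
  have "(u - c *\<^sub>R y) \<bullet> (u - c *\<^sub>R y) = u \<bullet> u + c\<^sup>2" if "u \<bullet> y = 0" for u c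
    using that y(1) by (simp add: inner_diff_left inner_diff_right inner_commute power2_eq_square)
  then have "(u - c *\<^sub>R y) \<bullet> (u - c *\<^sub>R y) = (norm u)\<^sup>2 + c\<^sup>2" if "u \<bullet> y = 0" for u c
    using that by (simp add: power2_norm_eq_inner)
  then have "(b x (e \<beta>) - (x \<bullet> e \<beta>) *\<^sub>R y) \<bullet> (b x (e \<beta>) - (x \<bullet> e \<beta>) *\<^sub>R y)
      = (norm (b x (e \<beta>)))\<^sup>2 + (x \<bullet> e \<beta>)\<^sup>2" for \<beta>
    using y(2) by blast
  moreover have "(b x x - (x \<bullet> x) *\<^sub>R y) \<bullet> (b (e \<beta>) (e \<beta>) - (e \<beta> \<bullet> e \<beta>) *\<^sub>R y)
      = b x x \<bullet> b (e \<beta>) (e \<beta>) + 1" for \<beta>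
    using y xx orth[of \<beta> \<beta>] by (simp add: inner_diff_left inner_diff_right inner_commute)
  ultimately have "(\<Sum>\<beta>\<in>UNIV. 4 * ((b x (e \<beta>) - (x \<bullet> e \<beta>) *\<^sub>R y) \<bullet> (b x (e \<beta>) - (x \<bullet> e \<beta>) *\<^sub>R y))
            - (b x x - (x \<bullet> x) *\<^sub>R y) \<bullet> (b (e \<beta>) (e \<beta>) - (e \<beta> \<bullet> e \<beta>) *\<^sub>R y))
      = 4 * (\<Sum>\<beta>\<in>UNIV. (norm (b x (e \<beta>)))\<^sup>2) + 4 * (\<Sum>\<beta>\<in>UNIV. (x \<bullet> e \<beta>)\<^sup>2)
        - b x x \<bullet> (\<Sum>\<beta>\<in>UNIV. b (e \<beta>) (e \<beta>)) - k"
    unfolding k_def by (simp add: sum.distrib sum_subtractf sum_distrib_left inner_sum_right algebra_simps)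
  also have "\<dots> \<le> 4 * S + 4 + sqrt k * S - k"
    using sum_norm_sff_unit_le inner_sff_mean_curvature_ge sum_inner_basis_squared
    unfolding S_def k_def by linarith
  also have "\<dots> < 0"
  proof -
    have "sqrt k + 4 > 0" unfolding k_def by (simp add: add_nonneg_pos)
    then have "S * (sqrt k + 4) < k - 4" using S unfolding S_def k_def by (simp add: pos_less_divide_eq)
    then show ?thesis by (simp add: algebra_simps)
  qed
  finally show ?thesis .
qed

end

lemma Phi_SSU_inequality_pad_vec:
  fixes N :: "(real^'q) set" and ix :: "nat \<Rightarrow> 'q"
  assumes ix: "bij_betw ix {..<CARD('q)} UNIV"
    and N: "submanifold TYPE('k::finite) N" "N \<subseteq> sphere 0 1" and y: "y \<in> N"
    and x: "x \<in> tangent_space TYPE('k) N y" "norm x = 1" and e: "onb TYPE('k) N y e"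
    and bound: "sqnorm_sff_S TYPE('k) N y e < (real CARD('k) - 4) / (sqrt (real CARD('k)) + 4)"
  shows "(\<Sum>\<beta>\<in>UNIV. 4 * innerQ CARD('q) (sff_F TYPE('k) N CARD('q) (pad_vec ix) y x (e \<beta>))
                         (sff_F TYPE('k) N CARD('q) (pad_vec ix) y x (e \<beta>))
            - innerQ CARD('q) (sff_F TYPE('k) N CARD('q) (pad_vec ix) y x x)
                (sff_F TYPE('k) N CARD('q) (pad_vec ix) y (e \<beta>) (e \<beta>))) < 0"
proof -
  obtain b where b: "bilinear b" "\<And>X Y. b X Y \<bullet> y = 0"
    and b_sff: "\<And>X Y. X \<in> tangent_space TYPE('k) N y \<Longrightarrow> Y \<in> tangent_space TYPE('k) N y \<Longrightarrow>
                   b X Y = sff_S TYPE('k) N y X Y"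
    using sff_S_bilinear_extension[OF N y] by metis
  have eT: "\<And>i. e i \<in> tangent_space TYPE('k) N y"
    and orth: "\<And>i j. e i \<bullet> e j = (if i = j then 1 else 0)"
    and x_span: "x \<in> span (range e)"
    using e x(1) unfolding onb_def by auto
  have "y \<bullet> y = 1" using y N(2) by (auto simp: norm_eq_1)
  have sff_F: "sff_F TYPE('k) N CARD('q) (pad_vec ix) y X Y = pad_vec ix (b X Y - (X \<bullet> Y) *\<^sub>R y)"
    if "X \<in> tangent_space TYPE('k) N y" "Y \<in> tangent_space TYPE('k) N y" for X Y
    using sff_F_pad_vec[OF ix N(1) y that] sff_R_eq_sff_S[OF N y that] b_sff[OF that] by simp
  have "(\<Sum>i\<in>UNIV. \<Sum>j\<in>UNIV. (norm (b (e i) (e j)))\<^sup>2)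
      < (real CARD('k) - 4) / (sqrt (real CARD('k)) + 4)"
    using bound unfolding sqnorm_sff_S_def by (simp add: b_sff eT)
  from SSU_sum_negative[OF b(1) orth x_span x(2) \<open>y \<bullet> y = 1\<close> b(2) this]
  show ?thesis by (simp add: sff_F x(1) eT innerQ_pad_vec[OF ix])
qed

theorem theorem5p4:
  fixes N :: "(real^'q) set"
  assumes "CARD('k::finite) > 4"
    and "submanifold TYPE('k) N"
    and "compact N"
    and "N \<subseteq> sphere 0 1"
    and "\<forall>y\<in>N. \<forall>e. onb TYPE('k) N y e \<longrightarrow>
           sqnorm_sff_S TYPE('k) N y e < (real CARD('k) - 4) / (sqrt (real CARD('k)) + 4)"
  shows "Phi_SSU TYPE('k) N"
proof -
  obtain ix :: "nat \<Rightarrow> 'q" where ix: "bij_betw ix {..<CARD('q)} UNIV"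
    using ex_bij_betw_nat_finite[of "UNIV :: 'q set"] by (auto simp: atLeast0LessThan)
  show ?thesis
    unfolding Phi_SSU_def
    using isometric_immersion_pad_vec[OF ix] Phi_SSU_inequality_pad_vec[OF ix assms(2,4)] assms(5)
    by blast
qed

end
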